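(* Let $(G,V,f)$ be an instance of coset identification and let $t\ge 1$ and $P\in[0,1]$. Then there exists a $t$-query (adaptive) quantum algorithm that determines $f(a)$ with average success probability $P$ if and only if there exists a $t$-query nonadaptive quantum algorithm that determines $f(a)$ with average success probability $P$.
   Context: A symmetric quantum oracle problem is a triple $(G,V,f)$ where $G$ is a finite group, $\pi:G\to U(V)$ is a unitary representation on a finite-dimensional Hilbert space $V$, and $f:G\to X$ is a function. It is an instance of coset identification if $X$ is a transitive left $G$-set and $f$ is a surjective map of left $G$-sets ($f(gh)=g\cdot f(h)$); equivalently $f$ is constant on the left cosets of the subgroup $H=\{g\in G: f(g)=f(e)\}$ and takes distinct values on distinct left cosets. A $t$-query adaptive algorithm consists of an integer $N\ge1$, a unit vector $\psi\in V\otimes\mathbb{C}^N$, unitaries $U_1,\dots,U_t$ on $V\otimes\mathbb{C}^N$ and a POVM $\{E_x\}_{x\in X}$ on $V\otimes\mathbb{C}^N$; on hidden element $a\in G$ it produces $\psi_a=U_t(\pi(a)\otimes I)U_{t-1}(\pi(a)\otimes I)\cdots U_1(\pi(a)\otimes I)\psi$ and outputs $x$ with probability $\langle\psi_a|E_x|\psi_a\rangle$. A $t$-query nonadaptive algorithm consists of $N\ge1$, a unit vector $\psi\in V^{\otimes t}\otimes\mathbb{C}^N$ and a POVM $\{E_x\}_{x\in X}$; on hidden $a$ it produces $\psi_a=(\pi(a)^{\otimes t}\otimes I)\psi$. In both cases the (average) success probability is $\frac1{|G|}\sum_{a\in G}\langle\psi_a|E_{f(a)}|\psi_a\rangle$,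 with $a$ uniform on $G$. *)

theory Defs
  imports "HOL-Algebra.Group" "Jordan_Normal_Form.Matrix"
begin

definition adj :: "complex mat \<Rightarrow> complex mat" where
  "adj A = mat (dim_col A) (dim_row A) (\<lambda>(i,j). cnj (A $$ (j,i)))"

definition unitary_mat :: "nat \<Rightarrow> complex mat \<Rightarrow> bool" where
  "unitary_mat n U \<longleftrightarrow> U \<in> carrier_mat n n \<and> adj U * U = 1\<^sub>m n \<and> U * adj U = 1\<^sub>m n"

(* Kronecker (tensor) product; index of (i,k) in C^m \<otimes> C^n is i*n+k. *)
definition kron :: "complex mat \<Rightarrow> complex mat \<Rightarrow> complex mat" where
  "kron A B = mat (dim_row A * dim_row B) (dim_col A * dim_col B)
     (\<lambda>(i,j). A $$ (i div dim_row B, j div dim_col B) * B $$ (i mod dim_row B, j mod dim_col B))"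

fun tpow :: "complex mat \<Rightarrow> nat \<Rightarrow> complex mat" where
  "tpow A 0 = 1\<^sub>m 1"
| "tpow A (Suc k) = kron (tpow A k) A"

definition psd :: "nat \<Rightarrow> complex mat \<Rightarrow> bool" where
  "psd n E \<longleftrightarrow> E \<in> carrier_mat n n \<and>
     (\<forall>v\<in>carrier_vec n. Im ((E *\<^sub>v v) \<bullet>c v) = 0 \<and> Re ((E *\<^sub>v v) \<bullet>c v) \<ge> 0)"

definition povm :: "nat \<Rightarrow> 'x set \<Rightarrow> ('x \<Rightarrow> complex mat) \<Rightarrow> bool" where
  "povm n X E \<longleftrightarrow> (\<forall>x\<in>X. psd n (E x)) \<and>
     (\<forall>i<n. \<forall>j<n. (\<Sum>x\<in>X. E x $$ (i,j)) = (1\<^sub>m n :: complex mat) $$ (i,j))"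

definition unit_vec :: "nat \<Rightarrow> complex vec \<Rightarrow> bool" where
  "unit_vec n v \<longleftrightarrow> v \<in> carrier_vec n \<and> v \<bullet>c v = 1"

definition unitary_rep :: "('g, 'b) monoid_scheme \<Rightarrow> nat \<Rightarrow> ('g \<Rightarrow> complex mat) \<Rightarrow> bool" where
  "unitary_rep G d \<pi> \<longleftrightarrow> (\<forall>g\<in>carrier G. unitary_mat d (\<pi> g)) \<and>
     (\<forall>g\<in>carrier G. \<forall>h\<in>carrier G. \<pi> (g \<otimes>\<^bsub>G\<^esub> h) = \<pi> g * \<pi> h)"

definition coset_identification ::
  "('g, 'b) monoid_scheme \<Rightarrow> 'x set \<Rightarrow> ('g \<Rightarrow> 'x \<Rightarrow> 'x) \<Rightarrow> ('g \<Rightarrow> 'x) \<Rightarrow> bool" where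
  "coset_identification G X act f \<longleftrightarrow>
     (\<forall>g\<in>carrier G. \<forall>x\<in>X. act g x \<in> X) \<and>
     (\<forall>x\<in>X. act \<one>\<^bsub>G\<^esub> x = x) \<and>
     (\<forall>g\<in>carrier G. \<forall>h\<in>carrier G. \<forall>x\<in>X. act (g \<otimes>\<^bsub>G\<^esub> h) x = act g (act h x)) \<and>
     (\<forall>x\<in>X. \<forall>y\<in>X. \<exists>g\<in>carrier G. act g x = y) \<and>
     f ` carrier G = X \<and>
     (\<forall>g\<in>carrier G. \<forall>h\<in>carrier G. f (g \<otimes>\<^bsub>G\<^esub> h) = act g (f h))"

definition success_prob ::
  "('g, 'b) monoid_scheme \<Rightarrow> ('g \<Rightarrow> 'x) \<Rightarrow> ('x \<Rightarrow> complex mat) \<Rightarrow> ('g \<Rightarrow> complex vec) \<Rightarrow> real" where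
  "success_prob G f E st =
     (\<Sum>a\<in>carrier G. Re ((E (f a) *\<^sub>v st a) \<bullet>c st a)) / real (card (carrier G))"

fun adaptive_state :: "complex mat \<Rightarrow> (nat \<Rightarrow> complex mat) \<Rightarrow> nat \<Rightarrow> complex vec \<Rightarrow> complex vec" where
  "adaptive_state Orc U 0 \<psi> = \<psi>"
| "adaptive_state Orc U (Suc k) \<psi> = U (Suc k) *\<^sub>v (Orc *\<^sub>v adaptive_state Orc U k \<psi>)"

definition adaptive_alg_exists ::
  "('g, 'b) monoid_scheme \<Rightarrow> nat \<Rightarrow> ('g \<Rightarrow> complex mat) \<Rightarrow> 'x set \<Rightarrow> ('g \<Rightarrow> 'x) \<Rightarrow> nat \<Rightarrow> real \<Rightarrow> bool" where
  "adaptive_alg_exists G d \<pi> X f t P \<longleftrightarrow>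
     (\<exists>N \<psi> U E. N \<ge> 1 \<and> unit_vec (d * N) \<psi> \<and>
        (\<forall>i\<in>{1..t}. unitary_mat (d * N) (U i)) \<and> povm (d * N) X E \<and>
        success_prob G f E (\<lambda>a. adaptive_state (kron (\<pi> a) (1\<^sub>m N)) U t \<psi>) = P)"

definition nonadaptive_alg_exists ::
  "('g, 'b) monoid_scheme \<Rightarrow> nat \<Rightarrow> ('g \<Rightarrow> complex mat) \<Rightarrow> 'x set \<Rightarrow> ('g \<Rightarrow> 'x) \<Rightarrow> nat \<Rightarrow> real \<Rightarrow> bool" where
  "nonadaptive_alg_exists G d \<pi> X f t P \<longleftrightarrow>
     (\<exists>N \<psi> E. N \<ge> 1 \<and> unit_vec (d ^ t * N) \<psi> \<and> povm (d ^ t * N) X E \<and>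
        success_prob G f E (\<lambda>a. kron (tpow (\<pi> a) t) (1\<^sub>m N) *\<^sub>v \<psi>) = P)"

end

theory Submission
  imports Defs "Jordan_Normal_Form.Schur_Decomposition"
begin

text \<open>Nonadaptive to adaptive: with a workspace of dimension \<open>d\<^sup>t\<^sup>-\<^sup>1 N\<close>, the single query
  \<open>\<pi>(a)\<^sup>\<otimes>\<^sup>t \<otimes> I\<close> is realised by \<open>t\<close> queries to \<open>\<pi>(a) \<otimes> I\<close>, permuting the tensor factors in between.

  Adaptive to nonadaptive: the final state of a \<open>t\<close>-query adaptive algorithm is
  \<open>\<psi>\<^sub>a = \<Sum>\<^sub>I\<^sub>J \<rho>(a)\<^sub>I\<^sub>J w\<^sub>I\<^sub>J\<close> for \<open>\<rho> = \<pi>\<^sup>\<otimes>\<^sup>t\<close> and fixed vectors \<open>w\<^sub>I\<^sub>J\<close>, i.e. the image of the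
  nonadaptive state \<open>(\<rho>(a) \<otimes> I) \<phi>\<close> (\<open>\<phi>\<close> maximally entangled) under a fixed linear map \<open>\<Phi>\<close>.
  Averaging \<open>\<Phi>\<close> over the group gives a \<open>G\<close>-invariant operator \<open>Q = avg\<^sub>c \<Phi>\<^sub>c\<^sup>* \<Phi>\<^sub>c\<close>; the state
  \<open>Q\<^sup>1\<^sup>/\<^sup>2 \<phi>\<close> measured with \<open>Q\<^sup>-\<^sup>1\<^sup>/\<^sup>2 M\<^sub>x Q\<^sup>-\<^sup>1\<^sup>/\<^sup>2\<close>, where \<open>M\<^sub>x = avg\<^sub>c \<Phi>\<^sub>c\<^sup>* E\<^sub>c\<^sub>\<inverse>\<^sub>x \<Phi>\<^sub>c\<close>, then succeeds
  on every hidden \<open>a\<close> with exactly the average success probability of the adaptive algorithm.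
  The action of \<open>G\<close> on \<open>X\<close> makes the \<open>M\<^sub>x\<close> sum to \<open>Q\<close>, and equivariance of \<open>f\<close> makes the
  success probability independent of \<open>a\<close>.\<close>

lemma index_mult_mat_sum:
  assumes "A \<in> carrier_mat n m" "B \<in> carrier_mat m p" "i < n" "j < p"
  shows "(A * B) $$ (i,j) = (\<Sum>k<m. A $$ (i,k) * B $$ (k,j))"
  using assms by (auto simp: index_mult_mat scalar_prod_def lessThan_atLeast0 intro!: sum.cong)

lemma index_mult_mat_vec_sum:
  assumes "A \<in> carrier_mat n m" "v \<in> carrier_vec m" "i < n"
  shows "(A *\<^sub>v v) $ i = (\<Sum>k<m. A $$ (i,k) * v $ k)"
  using assms by (auto simp: mult_mat_vec_def scalar_prod_def lessThan_atLeast0 intro!: sum.cong)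

lemma index_mult_mat_triple:
  assumes A: "A \<in> carrier_mat a b" and B: "B \<in> carrier_mat b c" and C: "C \<in> carrier_mat c e"
    and i: "i < a" and j: "j < e"
  shows "(A * B * C) $$ (i,j) = (\<Sum>k<b. \<Sum>l<c. A $$ (i,k) * B $$ (k,l) * C $$ (l,j))"
proof -
  have "(A * B * C) $$ (i,j) = (\<Sum>l<c. (A * B) $$ (i,l) * C $$ (l,j))"
    by (rule index_mult_mat_sum[OF mult_carrier_mat[OF A B] C i j])
  also have "\<dots> = (\<Sum>l<c. (\<Sum>k<b. A $$ (i,k) * B $$ (k,l)) * C $$ (l,j))"
    by (intro sum.cong refl) (simp add: index_mult_mat_sum[OF A B i])
  also have "\<dots> = (\<Sum>k<b. \<Sum>l<c. A $$ (i,k) * B $$ (k,l) * C $$ (l,j))"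
    by (simp add: sum_distrib_right sum.swap[of _ "{..<c}"])
  finally show ?thesis .
qed

lemma zero_mat_vec: "v \<in> carrier_vec m \<Longrightarrow> (0\<^sub>m n m :: 'a :: semiring_0 mat) *\<^sub>v v = 0\<^sub>v n"
  by (intro eq_vecI) (auto simp: index_mult_mat_vec_sum[of _ n m])

lemma mat_vec_zero: "A \<in> carrier_mat n m \<Longrightarrow> A *\<^sub>v 0\<^sub>v m = (0\<^sub>v n :: 'a :: semiring_0 vec)"
  by (intro eq_vecI) (auto simp: index_mult_mat_vec_sum)

lemma smult_mat_vec: "A \<in> carrier_mat n m \<Longrightarrow> v \<in> carrier_vec m \<Longrightarrow> (c \<cdot>\<^sub>m A) *\<^sub>v v = c \<cdot>\<^sub>v (A *\<^sub>v (v :: 'a :: comm_semiring_0 vec))"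
  by (intro eq_vecI) (auto simp: index_mult_mat_vec_sum[of _ n m] sum_distrib_left mult.assoc)

lemma cscalar_prod_sum:
  assumes "v \<in> carrier_vec n" "w \<in> carrier_vec n"
  shows "v \<bullet>c w = (\<Sum>i<n. v $ i * cnj (w $ i))"
  using assms by (auto simp: scalar_prod_def lessThan_atLeast0 intro!: sum.cong)

lemma cscalar_smult_left: "v \<in> carrier_vec n \<Longrightarrow> w \<in> carrier_vec n \<Longrightarrow> (a \<cdot>\<^sub>v v) \<bullet>c w = a * (v \<bullet>c w)"
  by (simp add: cscalar_prod_sum[of _ n] sum_distrib_left mult.assoc)

lemma cscalar_smult_right: "v \<in> carrier_vec n \<Longrightarrow> w \<in> carrier_vec n \<Longrightarrow> v \<bullet>c (a \<cdot>\<^sub>v w) = cnj a * (v \<bullet>c w)"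
  by (simp add: cscalar_prod_sum[of _ n] sum_distrib_left mult_ac)

lemma cscalar_add_left: "(v :: complex vec) \<in> carrier_vec n \<Longrightarrow> w \<in> carrier_vec n \<Longrightarrow> u \<in> carrier_vec n \<Longrightarrow>
   (v + w) \<bullet>c u = v \<bullet>c u + w \<bullet>c u"
  by (simp add: cscalar_prod_sum[of _ n] distrib_right sum.distrib)

lemma cscalar_add_right: "(v :: complex vec) \<in> carrier_vec n \<Longrightarrow> w \<in> carrier_vec n \<Longrightarrow> u \<in> carrier_vec n \<Longrightarrow>
   u \<bullet>c (v + w) = u \<bullet>c v + u \<bullet>c w"
  by (simp add: cscalar_prod_sum[of _ n] distrib_left sum.distrib)

lemma cscalar_zero_right: "(v :: complex vec) \<in> carrier_vec n \<Longrightarrow> v \<bullet>c 0\<^sub>v n = 0"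
  by (simp add: cscalar_prod_sum[of _ n])

lemma sum_delta_mult_right: "k < (n::nat) \<Longrightarrow> (\<Sum>l<n. (a l :: complex) * (if l = k then g l else 0)) = a k * g k"
  by (simp add: if_distrib sum.delta sum.delta' cong: if_cong)

lemma sum_delta_mult_left: assumes "k < (n::nat)" shows "(\<Sum>l<n. (if k = l then g l else 0) * (a l :: complex)) = g k * a k"
proof -
  have "(\<Sum>l<n. (if k = l then g l else 0) * (a l :: complex)) = (\<Sum>l<n. if k = l then g k * a k else 0)"
    by (intro sum.cong) auto
  thus ?thesis using assms by simp
qed

lemma pair_index_less: "i < a \<Longrightarrow> k < c \<Longrightarrow> i*c+k < a*(c::nat)"
proof -
  assume "i < a" "k < c"
  hence "i*c+k < (Suc i)*c" by simp
  also have "\<dots> \<le> a*c" using \<open>i<a\<close> by (intro mult_le_mono1) auto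
  finally show ?thesis .
qed

lemma sum_lessThan_mult: "(\<Sum>k<m*n. f k) = (\<Sum>i<m. \<Sum>j<n. f (i*n+j::nat))"
proof -
  have "bij_betw (\<lambda>(i,j). i*n+j) ({..<m}\<times>{..<n}) {..<m*n}"
  proof (rule bij_betwI[where g = "\<lambda>k. (k div n, k mod n)"])
    show "(\<lambda>k. (k div n, k mod n)) \<in> {..<m*n} \<rightarrow> {..<m}\<times>{..<n}"
      by (auto simp: less_mult_imp_div_less) (metis mod_less_divisor mult_zero_right not_less_zero gr0I)
  qed (auto simp: pair_index_less)
  from sum.reindex_bij_betw[OF this, of f] show ?thesis by (simp add: sum.cartesian_product split_def)
qed

lemma pair_index_div_mod[simp]:
  "k < (c::nat) \<Longrightarrow> (i*c+k) div c = i" "k < c \<Longrightarrow> (i*c+k) mod c = k"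
  by simp_all

lemma pair_index_eq_iff: "k < (c::nat) \<Longrightarrow> k' < c \<Longrightarrow> i*c+k = i'*c+k' \<longleftrightarrow> i = i' \<and> k = k'"
  by (metis pair_index_div_mod)

lemma pair_bij:
  fixes D d :: nat
  shows "bij_betw (\<lambda>((I,J),(i,j)). (I*d+i, J*d+j)) (({..<D}\<times>{..<D})\<times>({..<d}\<times>{..<d})) ({..<D*d}\<times>{..<D*d})"
proof (rule bij_betwI[where g = "\<lambda>(P,Q). ((P div d, Q div d), (P mod d, Q mod d))"])
  show "(\<lambda>((I,J),(i,j)). (I*d+i, J*d+j)) \<in> ({..<D}\<times>{..<D})\<times>({..<d}\<times>{..<d}) \<rightarrow> {..<D*d}\<times>{..<D*d}"
    by (auto simp: pair_index_less)
  show "(\<lambda>(P,Q). ((P div d, Q div d), (P mod d, Q mod d))) \<in> {..<D*d}\<times>{..<D*d} \<rightarrow> ({..<D}\<times>{..<D})\<times>({..<d}\<times>{..<d})"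
  proof
    fix x assume "x \<in> {..<D*d}\<times>{..<D*d}"
    then obtain P Q where x: "x = (P,Q)" "P < D*d" "Q < D*d" by auto
    have d0: "d > 0" using x by (cases d) auto
    show "(\<lambda>(P,Q). ((P div d, Q div d), (P mod d, Q mod d))) x \<in> ({..<D}\<times>{..<D})\<times>({..<d}\<times>{..<d})"
      using x d0 by (auto simp: less_mult_imp_div_less)
  qed
qed auto

lemma adj_carrier[simp]: "A \<in> carrier_mat n m \<Longrightarrow> adj A \<in> carrier_mat m n"
  by (auto simp: adj_def)

lemma adj_dims[simp]: "dim_row (adj A) = dim_col A" "dim_col (adj A) = dim_row A"
  by (auto simp: adj_def)

lemma adj_index[simp]: "i < dim_col A \<Longrightarrow> j < dim_row A \<Longrightarrow> adj A $$ (i,j) = cnj (A $$ (j,i))"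
  by (auto simp: adj_def)

lemma adj_adj[simp]: "adj (adj A) = A"
  by (rule eq_matI, auto)

lemma adj_mult: assumes "A \<in> carrier_mat n m" "B \<in> carrier_mat m p"
  shows "adj (A * B) = adj B * adj A"
proof (rule eq_matI)
  fix i j assume ij: "i < dim_row (adj B * adj A)" "j < dim_col (adj B * adj A)"
  hence i: "i < p" and j: "j < n" using assms by auto
  have "adj (A * B) $$ (i,j) = cnj ((A*B) $$ (j,i))" using assms i j by auto
  also have "\<dots> = (\<Sum>k<m. cnj (A $$ (j,k)) * cnj (B $$ (k,i)))"
    by (subst index_mult_mat_sum[OF assms j i], simp)
  also have "\<dots> = (adj B * adj A) $$ (i,j)"
    by (subst index_mult_mat_sum[of _ p m _ n], insert assms i j, auto simp: mult.commute intro!: sum.cong)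
  finally show "adj (A * B) $$ (i,j) = (adj B * adj A) $$ (i,j)" .
qed (insert assms, auto)

lemma adj_one[simp]: "adj (1\<^sub>m n) = 1\<^sub>m n"
  by (rule eq_matI, auto)

lemma adj_cscalar:
  assumes "A \<in> carrier_mat n m" "x \<in> carrier_vec n" "y \<in> carrier_vec m"
  shows "(adj A *\<^sub>v x) \<bullet>c y = x \<bullet>c (A *\<^sub>v y)"
proof -
  have "(adj A *\<^sub>v x) \<bullet>c y = (\<Sum>i<m. (\<Sum>k<n. cnj (A $$ (k,i)) * x $ k) * cnj (y $ i))"
    using assms by (subst cscalar_prod_sum[of _ m], auto simp: index_mult_mat_vec_sum[of _ m n] simp del: index_mult_mat_vec intro!: sum.cong mult_mat_vec_carrier[of _ m n])
  also have "\<dots> = (\<Sum>k<n. x $ k * cnj (\<Sum>i<m. A $$ (k,i) * y $ i))"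
    by (simp add: sum_distrib_left sum_distrib_right sum.swap[of _ "{..<m}"] mult_ac)
  also have "\<dots> = x \<bullet>c (A *\<^sub>v y)"
    using assms by (subst cscalar_prod_sum[of _ n], auto simp: index_mult_mat_vec_sum[of _ n m] simp del: index_mult_mat_vec intro!: sum.cong)
  finally show ?thesis .
qed

lemma hermitian_cscalar: "A \<in> carrier_mat n n \<Longrightarrow> adj A = A \<Longrightarrow> x \<in> carrier_vec n \<Longrightarrow> y \<in> carrier_vec n \<Longrightarrow>
   (A *\<^sub>v x) \<bullet>c y = x \<bullet>c (A *\<^sub>v y)"
  using adj_cscalar[of A n n x y] by simp

lemma unitary_cscalar_self:
  assumes "unitary_mat n U" "v \<in> carrier_vec n"
  shows "(U *\<^sub>v v) \<bullet>c (U *\<^sub>v v) = v \<bullet>c v"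
proof -
  have U: "U \<in> carrier_mat n n" and UU: "adj U * U = 1\<^sub>m n" using assms by (auto simp: unitary_mat_def)
  have "(U *\<^sub>v v) \<bullet>c (U *\<^sub>v v) = (adj U *\<^sub>v (U *\<^sub>v v)) \<bullet>c v"
    using adj_cscalar[of U n n "U *\<^sub>v v" v] U assms by auto
  also have "adj U *\<^sub>v (U *\<^sub>v v) = v" using U UU assms
    by (metis adj_carrier assoc_mult_mat_vec one_mult_mat_vec)
  finally show ?thesis .
qed

lemma unitary_mult: assumes "unitary_mat n U" "unitary_mat n V" shows "unitary_mat n (U * V)"
proof -
  have U: "U \<in> carrier_mat n n" and V: "V \<in> carrier_mat n n" using assms by (auto simp: unitary_mat_def)
  have aU: "adj U \<in> carrier_mat n n" and aV: "adj V \<in> carrier_mat n n" using U V by auto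
  have "adj (U*V) * (U*V) = (adj V * adj U) * (U * V)" by (simp add: adj_mult[OF U V])
  also have "\<dots> = adj V * (adj U * (U * V))" using aU aV U V by (simp add: assoc_mult_mat[of _ n n _ n _ n])
  also have "adj U * (U * V) = (adj U * U) * V" using aU U V by (simp add: assoc_mult_mat[of _ n n _ n _ n])
  also have "\<dots> = V" using assms V by (simp add: unitary_mat_def)
  finally have 1: "adj (U*V) * (U*V) = 1\<^sub>m n" using assms by (simp add: unitary_mat_def)
  have "(U*V) * adj (U*V) = (U * V) * (adj V * adj U)" by (simp add: adj_mult[OF U V])
  also have "\<dots> = U * (V * (adj V * adj U))" using aU aV U V by (intro assoc_mult_mat[of _ n n _ n _ n]) auto
  also have "V * (adj V * adj U) = (V * adj V) * adj U" using aU aV V by (simp add: assoc_mult_mat[of _ n n _ n _ n])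
  also have "\<dots> = adj U" using assms aU by (auto simp: unitary_mat_def)
  finally have 2: "(U*V) * adj (U*V) = 1\<^sub>m n" using assms by (simp add: unitary_mat_def)
  show ?thesis using 1 2 U V by (auto simp: unitary_mat_def)
qed

lemma unitary_one: "unitary_mat n (1\<^sub>m n)"
  by (simp add: unitary_mat_def)

lemma unitary_adj: "unitary_mat n U \<Longrightarrow> unitary_mat n (adj U)"
  by (auto simp: unitary_mat_def)

lemma unitary_matD: "unitary_mat n U \<Longrightarrow> adj U * U = 1\<^sub>m n \<and> U * adj U = 1\<^sub>m n \<and> U \<in> carrier_mat n n"
  by (auto simp: unitary_mat_def)

lemma unitary_adj_mult_cancel: "unitary_mat n U \<Longrightarrow> Z \<in> carrier_mat n m \<Longrightarrow> adj U * (U * Z) = Z"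
  by (subst assoc_mult_mat[symmetric, of _ n n _ n _ m]) (auto simp: unitary_mat_def)

lemma unitary_mult_adj_cancel: "unitary_mat n U \<Longrightarrow> Z \<in> carrier_mat n m \<Longrightarrow> U * (adj U * Z) = Z"
  by (subst assoc_mult_mat[symmetric, of _ n n _ n _ m]) (auto simp: unitary_mat_def)

lemma unitary_conj_mult:
  assumes U: "unitary_mat n U" and X: "X \<in> carrier_mat n n" and Y: "Y \<in> carrier_mat n n"
  shows "U * (X * Y) * adj U = (U * X * adj U) * (U * Y * adj U)"
  using U X Y unitary_matD[OF U] unitary_adj_mult_cancel[OF U, of "Y * adj U" n]
  by (simp add: assoc_mult_mat[of _ n n _ n _ n] mult_carrier_mat[of _ n n _ n])

lemma unitary_conj_adj_mult:
  assumes U: "unitary_mat n U" and X: "X \<in> carrier_mat n n" and Y: "Y \<in> carrier_mat n n"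
  shows "adj U * (X * Y) * U = (adj U * X * U) * (adj U * Y * U)"
  using U X Y unitary_matD[OF U] unitary_mult_adj_cancel[OF U, of "Y * U" n]
  by (simp add: assoc_mult_mat[of _ n n _ n _ n] mult_carrier_mat[of _ n n _ n])

lemma unitary_conj_cancel:
  assumes U: "unitary_mat n U" and X: "X \<in> carrier_mat n n"
  shows "U * (adj U * X * U) * adj U = X" "adj U * (U * X * adj U) * U = X"
  using U X unitary_matD[OF U] unitary_adj_mult_cancel[OF U, of "X * U" n] unitary_mult_adj_cancel[OF U, of "X * adj U" n]
     unitary_adj_mult_cancel[OF U, of "X" n] unitary_mult_adj_cancel[OF U, of "X" n]
  by (simp_all add: assoc_mult_mat[of _ n n _ n _ n] mult_carrier_mat[of _ n n _ n])

lemma unit_vec_dim_pos: "unit_vec n v \<Longrightarrow> n > 0"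
  by (cases n) (auto simp: unit_vec_def cscalar_prod_sum[of _ 0])

lemma kron_carrier[simp]: "A \<in> carrier_mat a b \<Longrightarrow> B \<in> carrier_mat c e \<Longrightarrow> kron A B \<in> carrier_mat (a*c) (b*e)"
  by (auto simp: kron_def)

lemma kron_dims[simp]: "dim_row (kron A B) = dim_row A * dim_row B" "dim_col (kron A B) = dim_col A * dim_col B"
  by (auto simp: kron_def)

lemma kron_index:
  assumes "A \<in> carrier_mat a b" "B \<in> carrier_mat c e" "i < a*c" "j < b*e"
  shows "kron A B $$ (i,j) = A $$ (i div c, j div e) * B $$ (i mod c, j mod e)"
  using assms by (auto simp: kron_def)

lemma kron_index_pair:
  assumes "A \<in> carrier_mat a b" "B \<in> carrier_mat c e" "i < a" "j < b" "k < c" "l < e"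
  shows "kron A B $$ (i*c+k, j*e+l) = A $$ (i, j) * B $$ (k, l)"
  using assms pair_index_less[of i a k c] pair_index_less[of j b l e] by (simp add: kron_index)

lemma kron_mult:
  assumes A: "A \<in> carrier_mat a b" and B: "B \<in> carrier_mat c e"
    and C: "C \<in> carrier_mat b p" and D: "D \<in> carrier_mat e q"
  shows "kron A B * kron C D = kron (A*C) (B*D)"
proof (rule eq_matI)
  fix i j assume "i < dim_row (kron (A*C) (B*D))" "j < dim_col (kron (A*C) (B*D))"
  hence i: "i < a*c" and j: "j < p*q" using assms by auto
  have c0: "c > 0" using i by (cases c) auto
  have q0: "q > 0" using j by (cases q) auto
  have "(kron A B * kron C D) $$ (i,j) = (\<Sum>k<b*e. kron A B $$ (i,k) * kron C D $$ (k,j))"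
    by (rule index_mult_mat_sum[OF kron_carrier[OF A B] kron_carrier[OF C D] i j])
  also have "\<dots> = (\<Sum>k1<b. \<Sum>k2<e. kron A B $$ (i,k1*e+k2) * kron C D $$ (k1*e+k2,j))"
    by (rule sum_lessThan_mult)
  also have "\<dots> = (\<Sum>k1<b. \<Sum>k2<e. (A $$ (i div c, k1) * C $$ (k1, j div q)) * (B $$ (i mod c, k2) * D $$ (k2, j mod q)))"
    by (intro sum.cong refl, subst kron_index[OF A B i], simp add: pair_index_less,
        subst kron_index[OF C D _ j], simp add: pair_index_less, simp)
  also have "\<dots> = (\<Sum>k1<b. A $$ (i div c, k1) * C $$ (k1, j div q)) * (\<Sum>k2<e. B $$ (i mod c, k2) * D $$ (k2, j mod q))"
    by (simp add: sum_product)
  also have "\<dots> = (A*C) $$ (i div c, j div q) * (B*D) $$ (i mod c, j mod q)"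
    using i j c0 q0 
    by (simp add: index_mult_mat_sum[OF A C] index_mult_mat_sum[OF B D] less_mult_imp_div_less)
  also have "\<dots> = kron (A*C) (B*D) $$ (i,j)"
    using i j by (simp add: kron_index[OF mult_carrier_mat[OF A C] mult_carrier_mat[OF B D]])
  finally show "(kron A B * kron C D) $$ (i,j) = kron (A*C) (B*D) $$ (i,j)" .
qed (insert assms, auto)

lemma kron_one: "kron (1\<^sub>m a) (1\<^sub>m b) = 1\<^sub>m (a*b)"
proof (rule eq_matI)
  fix i j assume "i < dim_row (1\<^sub>m (a*b))" "j < dim_col (1\<^sub>m (a*b))"
  hence i: "i < a*b" and j: "j < a*b" by auto
  have b0: "b > 0" using i by (cases b) auto
  have "i = j \<longleftrightarrow> i div b = j div b \<and> i mod b = j mod b"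
    by (metis div_mult_mod_eq)
  thus "kron (1\<^sub>m a) (1\<^sub>m b) $$ (i,j) = 1\<^sub>m (a*b) $$ (i,j)"
    using i j b0 by (simp add: kron_index[of _ a a _ b b] less_mult_imp_div_less)
qed auto

lemma kron_one_1_left: assumes "A \<in> carrier_mat a b" shows "kron (1\<^sub>m 1) A = A"
proof (rule eq_matI)
  fix i j assume "i < dim_row A" "j < dim_col A"
  hence i: "i < 1*a" and j: "j < 1*b" using assms by auto
  show "kron (1\<^sub>m 1) A $$ (i,j) = A $$ (i,j)"
    using kron_index[OF one_carrier_mat assms i j] i j by simp
qed (insert assms, auto)

lemma adj_kron: assumes "A \<in> carrier_mat a b" "B \<in> carrier_mat c e"
  shows "adj (kron A B) = kron (adj A) (adj B)"
proof (rule eq_matI)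
  fix i j assume "i < dim_row (kron (adj A) (adj B))" "j < dim_col (kron (adj A) (adj B))"
  hence i: "i < b*e" and j: "j < a*c" using assms by auto
  have e0: "e > 0" using i by (cases e) auto
  have c0: "c > 0" using j by (cases c) auto
  show "adj (kron A B) $$ (i,j) = kron (adj A) (adj B) $$ (i,j)"
    using i j assms e0 c0
    by (simp add: kron_index[of _ a b _ c e] kron_index[of _ b a _ e c] less_mult_imp_div_less)
qed (insert assms, auto)

lemma div_mod_mult_nested:
  fixes i p c :: nat assumes p0: "p > 0"
  shows "i div p div c = i div (c*p) \<and> i div p mod c = i mod (c*p) div p \<and> i mod p = i mod (c*p) mod p"
proof -
  have a: "i mod (p*c) = p*(i div p mod c) + i mod p" by (rule mod_mult2_eq)
  have "i mod (c*p) div p = i div p mod c" using a p0 by (simp add: mult.commute)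
  moreover have "i mod (c*p) mod p = i mod p" using a p0 by (simp add: mult.commute)
  moreover have "i div p div c = i div (c*p)"
  proof -
    have "i div (c*p) = i div (p*c)" by (simp add: mult.commute)
    thus ?thesis by (simp add: div_mult2_eq)
  qed
  ultimately show ?thesis by simp
qed

lemma kron_assoc:
  assumes A: "A \<in> carrier_mat a b" and B: "B \<in> carrier_mat c e" and C: "C \<in> carrier_mat p q"
  shows "kron (kron A B) C = kron A (kron B C)"
proof (rule eq_matI)
  fix i j assume "i < dim_row (kron A (kron B C))" "j < dim_col (kron A (kron B C))"
  hence i: "i < a*(c*p)" and j: "j < b*(e*q)" using assms by auto
  have p0: "p > 0" and c0: "c > 0" using i by (cases p; cases c; auto)+
  have q0: "q > 0" and e0: "e > 0" using j by (cases q; cases e; auto)+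
  have i': "i < a*c*p" and j': "j < b*e*q" using i j by (simp_all add: mult.assoc)
  have 1: "i div p div c = i div (c*p)" "i div p mod c = i mod (c*p) div p" "i mod p = i mod (c*p) mod p"
    using div_mod_mult_nested[OF p0, of i c] by auto
  have 2: "j div q div e = j div (e*q)" "j div q mod e = j mod (e*q) div q" "j mod q = j mod (e*q) mod q"
    using div_mod_mult_nested[OF q0, of j e] by auto
  have "kron (kron A B) C $$ (i,j) = A $$ (i div p div c, j div q div e) * B $$ (i div p mod c, j div q mod e) * C $$ (i mod p, j mod q)"
    using i' j' p0 q0 c0 e0 assms
    by (simp add: kron_index[OF kron_carrier[OF A B] C] kron_index[OF A B] less_mult_imp_div_less)
  also have "\<dots> = kron A (kron B C) $$ (i,j)"
    using i j p0 q0 c0 e0 assms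
    by (simp add: kron_index[OF A kron_carrier[OF B C]] kron_index[OF B C] 1 2)
  finally show "kron (kron A B) C $$ (i,j) = kron A (kron B C) $$ (i,j)" .
qed (insert assms, auto simp: mult.assoc)

lemma unitary_kron: assumes "unitary_mat a A" "unitary_mat b B" shows "unitary_mat (a*b) (kron A B)"
proof -
  have A: "A \<in> carrier_mat a a" and B: "B \<in> carrier_mat b b" using assms by (auto simp: unitary_mat_def)
  show ?thesis using assms A B
    by (auto simp: unitary_mat_def adj_kron[OF A B] kron_mult[OF A B adj_carrier[OF A] adj_carrier[OF B]]
       kron_mult[OF adj_carrier[OF A] adj_carrier[OF B] A B] kron_one)
qed

lemma tpow_carrier: "A \<in> carrier_mat d d \<Longrightarrow> tpow A k \<in> carrier_mat (d^k) (d^k)"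
  by (induct k) (auto simp: mult.commute intro!: kron_carrier[of _ "d^k" "d^k" _ d d, simplified mult.commute])

lemma tpow_mult: assumes "A \<in> carrier_mat d d" "B \<in> carrier_mat d d"
  shows "tpow A k * tpow B k = tpow (A * B) k"
  by (induct k) (insert assms, auto simp: kron_mult[OF tpow_carrier[OF assms(1)] assms(1) tpow_carrier[OF assms(2)] assms(2)])

lemma tpow_adj: assumes "A \<in> carrier_mat d d" shows "adj (tpow A k) = tpow (adj A) k"
  by (induct k) (insert assms, auto simp: adj_kron[OF tpow_carrier])

lemma tpow_unitary: "unitary_mat d A \<Longrightarrow> unitary_mat (d^k) (tpow A k)"
proof (induct k)
  case 0 thus ?case using unitary_one[of 1] by simp
next
  case (Suc k) thus ?case using unitary_kron[of "d^k" "tpow A k" d A] by (simp add: mult.commute)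
qed

lemma tpow_1: "A \<in> carrier_mat a b \<Longrightarrow> tpow A 1 = A"
  by (simp add: kron_one_1_left[unfolded One_nat_def])

section \<open>The spectral theorem for Hermitian matrices\<close>

definition diagm :: "nat \<Rightarrow> (nat \<Rightarrow> complex) \<Rightarrow> complex mat" where
  "diagm n g = mat n n (\<lambda>(i,j). if i = j then g i else 0)"

lemma diagm_carrier[simp]: "diagm n g \<in> carrier_mat n n"
  by (simp add: diagm_def)

lemma diagm_dims[simp]: "dim_row (diagm n g) = n" "dim_col (diagm n g) = n"
  by (auto simp: diagm_def)

lemma diagm_index[simp]: "i < n \<Longrightarrow> j < n \<Longrightarrow> diagm n g $$ (i,j) = (if i = j then g i else 0)"
  by (simp add: diagm_def)

lemma index_mult_diagm: assumes B: "B \<in> carrier_mat n n" and i: "i < n" and j: "j < n"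
  shows "(B * diagm n h) $$ (i,j) = B $$ (i,j) * h j" "(diagm n h * B) $$ (i,j) = h i * B $$ (i,j)"
proof -
  have "(B * diagm n h) $$ (i,j) = (\<Sum>l<n. B $$ (i,l) * diagm n h $$ (l,j))"
    by (rule index_mult_mat_sum[OF B diagm_carrier i j])
  also have "\<dots> = (\<Sum>l<n. B $$ (i,l) * (if l = j then h l else 0))" using j by (intro sum.cong) auto
  also have "\<dots> = B $$ (i,j) * h j" using j by (rule sum_delta_mult_right)
  finally show "(B * diagm n h) $$ (i,j) = B $$ (i,j) * h j" .
  have "(diagm n h * B) $$ (i,j) = (\<Sum>l<n. diagm n h $$ (i,l) * B $$ (l,j))"
    by (rule index_mult_mat_sum[OF diagm_carrier B i j])
  also have "\<dots> = (\<Sum>l<n. (if i = l then h l else 0) * B $$ (l,j))" using i by (intro sum.cong) auto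
  also have "\<dots> = h i * B $$ (i,j)" using i by (rule sum_delta_mult_left)
  finally show "(diagm n h * B) $$ (i,j) = h i * B $$ (i,j)" .
qed

lemma diagm_mult: "diagm n h * diagm n k = diagm n (\<lambda>i. h i * k i)"
  by (rule eq_matI) (auto simp: index_mult_diagm(1)[OF diagm_carrier] simp del: index_mult_mat(1))

lemma adj_diagm: "adj (diagm n h) = diagm n (\<lambda>i. cnj (h i))"
  by (rule eq_matI) (auto simp: diagm_def)

lemma diagm_one: "diagm n (\<lambda>_. 1) = 1\<^sub>m n"
  by (rule eq_matI) (auto simp: diagm_def)

lemma index_conj_diagm:
  assumes U: "U \<in> carrier_mat n n" and i: "i < n" and j: "j < n"
  shows "(U * diagm n g * adj U) $$ (i,j) = (\<Sum>k<n. U$$(i,k) * g k * cnj (U$$(j,k)))"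
proof -
  have "(U * diagm n g * adj U) $$ (i,j) = (\<Sum>k<n. (U * diagm n g)$$(i,k) * adj U $$ (k,j))"
    by (rule index_mult_mat_sum[of _ n n _ n]) (use assms in auto)
  thus ?thesis using U j by (simp add: index_mult_diagm[OF U i])
qed

definition normalize_vec :: "complex vec \<Rightarrow> complex vec" where
  "normalize_vec w = (1 / complex_of_real (sqrt (Re (w \<bullet>c w)))) \<cdot>\<^sub>v w"

lemma normalize_vec_carrier[simp]: "w \<in> carrier_vec n \<Longrightarrow> normalize_vec w \<in> carrier_vec n"
  by (simp add: normalize_vec_def)

lemma cscalar_self_pos:
  assumes "w \<in> carrier_vec n" "w \<bullet>c w \<noteq> 0"
  shows "Im (w \<bullet>c w) = 0" "Re (w \<bullet>c w) > 0"
proof -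
  have "0 \<le> w \<bullet>c w" by (rule conjugate_square_ge_0_vec)
  thus "Im (w \<bullet>c w) = 0" by (simp add: less_eq_complex_def)
  with \<open>0 \<le> w \<bullet>c w\<close> assms(2) show "Re (w \<bullet>c w) > 0"
    by (auto simp: less_eq_complex_def complex_eq_iff)
qed

lemma normalize_vec_norm:
  assumes "w \<in> carrier_vec n" "w \<bullet>c w \<noteq> 0"
  shows "normalize_vec w \<bullet>c normalize_vec w = 1"
proof -
  note p = cscalar_self_pos[OF assms]
  define r where "r = Re (w \<bullet>c w)"
  have w: "w \<bullet>c w = complex_of_real r" using p by (simp add: r_def complex_eq_iff)
  have r: "r > 0" using p by (simp add: r_def)
  have "normalize_vec w \<bullet>c normalize_vec w = (1 / complex_of_real (sqrt r)) * cnj (1 / complex_of_real (sqrt r)) * (w \<bullet>c w)"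
    unfolding normalize_vec_def r_def[symmetric]
    using assms by (simp add: cscalar_smult_left[of _ n] cscalar_smult_right[of _ n])
  also have "\<dots> = 1" using r unfolding w
    by (simp add: field_simps of_real_mult[symmetric] del: of_real_mult)
  finally show ?thesis .
qed

lemma normalize_vec_unit: assumes "w \<in> carrier_vec n" "w \<bullet>c w = 1" shows "normalize_vec w = w"
  using assms by (simp add: normalize_vec_def)

lemma normalize_vec_orth:
  assumes "v \<in> carrier_vec n" "w \<in> carrier_vec n" "v \<bullet>c w = 0"
  shows "normalize_vec v \<bullet>c normalize_vec w = 0"
  using assms unfolding normalize_vec_def by (simp add: cscalar_smult_left[of _ n] cscalar_smult_right[of _ n])

lemma square_mat_has_eigenvector:
  assumes A: "(A :: complex mat) \<in> carrier_mat (Suc m) (Suc m)"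
  shows "\<exists>e v. v \<in> carrier_vec (Suc m) \<and> v \<noteq> 0\<^sub>v (Suc m) \<and> A *\<^sub>v v = e \<cdot>\<^sub>v v"
proof -
  obtain as where cp: "char_poly A = (\<Prod> a \<leftarrow> as. [:-a,1:])" and len: "length as = Suc m"
    using char_poly_factorized[OF A] by blast
  then obtain e es where as: "as = e # es" by (cases as) auto
  have "poly (char_poly A) e = 0" by (simp add: cp as)
  hence "eigenvalue A e" using eigenvalue_root_char_poly[OF A] by simp
  thus ?thesis using A unfolding eigenvalue_def eigenvector_def by auto
qed

lemma mat_of_cols_entry: "j < length vs \<Longrightarrow> i < n \<Longrightarrow> mat_of_cols n vs $$ (i,j) = vs ! j $ i"
  by (simp add: mat_of_cols_def)

lemma corthogonal_normalize_orthonormal: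
  assumes orth: "corthogonal ws" and car: "set ws \<subseteq> carrier_vec n" and i: "i < length ws" and j: "j < length ws"
  shows "map normalize_vec ws ! i \<bullet>c map normalize_vec ws ! j = (if i = j then 1 else 0)"
proof -
  have ci: "ws ! i \<in> carrier_vec n" and cj: "ws ! j \<in> carrier_vec n" using i j car by auto
  have "ws ! i \<bullet>c ws ! j = 0 \<longleftrightarrow> i \<noteq> j" using orth i j by (auto simp: corthogonal_def)
  thus ?thesis using i j normalize_vec_norm[OF ci] normalize_vec_orth[OF ci cj] by auto
qed

lemma orthonormal_completion:
  assumes u: "(u :: complex vec) \<in> carrier_vec n" and u1: "u \<bullet>c u = 1"
  shows "\<exists>ws. length ws = n \<and> set ws \<subseteq> carrier_vec n \<and> ws ! 0 = u \<and>
     (\<forall>i<n. \<forall>j<n. ws ! i \<bullet>c ws ! j = (if i = j then 1 else 0))"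
proof -
  interpret cof_vec_space n "TYPE(complex)" .
  have u0: "u \<noteq> 0\<^sub>v n" using u1 by auto
  note bc = basis_completion[OF u u0]
  define b where "b = basis_completion u"
  define ws where "ws = gram_schmidt n b"
  have n0: "n > 0" using bc(6) bc(7) u0 u by (cases n) auto
  from bc have dist: "distinct b" and ind: "\<not> lin_dep (set b)" and bcar: "set b \<subseteq> carrier_vec n"
    and hdb: "hd b = u" and lenb: "length b = n" by (auto simp: b_def)
  from hdb lenb n0 obtain vs where bv: "b = u # vs" by (cases b) auto
  note gs = gram_schmidt_result[OF bcar dist ind ws_def]
  have hd: "hd ws = u" unfolding ws_def bv by (rule gram_schmidt_hd[OF u])
  have ws0: "ws ! 0 = u" using hd gs lenb n0 by (cases ws) auto
  show ?thesis
  proof (intro exI conjI)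
    show "length (map normalize_vec ws) = n" "set (map normalize_vec ws) \<subseteq> carrier_vec n"
      using gs lenb by auto
    show "map normalize_vec ws ! 0 = u" using ws0 gs lenb n0 normalize_vec_unit[OF u u1] by simp
    show "\<forall>i<n. \<forall>j<n. map normalize_vec ws ! i \<bullet>c map normalize_vec ws ! j = (if i = j then 1 else 0)"
      using corthogonal_normalize_orthonormal[OF gs(2,3)] gs lenb by simp
  qed
qed

lemma unitary_mat_of_cols:
  assumes len: "length ws = n" and car: "set ws \<subseteq> carrier_vec n"
    and on: "\<forall>i<n. \<forall>j<n. ws ! i \<bullet>c ws ! j = (if i = j then 1 else 0)"
  shows "unitary_mat n (mat_of_cols n ws)"
proof -
  let ?W = "mat_of_cols n ws"
  have W: "?W \<in> carrier_mat n n" using len by auto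
  have 1: "adj ?W * ?W = 1\<^sub>m n"
  proof (rule eq_matI)
    fix i j assume "i < dim_row (1\<^sub>m n)" "j < dim_col (1\<^sub>m n)"
    hence i: "i < n" and j: "j < n" by auto
    have cj: "ws ! j \<in> carrier_vec n" and ci: "ws ! i \<in> carrier_vec n" using car len i j by auto
    have "(adj ?W * ?W) $$ (i,j) = (\<Sum>k<n. adj ?W $$ (i,k) * ?W $$ (k,j))"
      by (rule index_mult_mat_sum[of _ n n _ n]) (use W i j in auto)
    also have "\<dots> = (\<Sum>k<n. ws ! j $ k * cnj (ws ! i $ k))"
      using W i j len by (intro sum.cong) (auto simp: mat_of_cols_entry mult.commute)
    also have "\<dots> = ws ! j \<bullet>c ws ! i" using ci cj by (simp add: cscalar_prod_sum[of _ n])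
    also have "\<dots> = 1\<^sub>m n $$ (i,j)" using on i j by auto
    finally show "(adj ?W * ?W) $$ (i,j) = 1\<^sub>m n $$ (i,j)" .
  qed (use W in auto)
  have 2: "?W * adj ?W = 1\<^sub>m n" by (rule mat_mult_left_right_inverse[OF _ W 1]) (use W in auto)
  show ?thesis using 1 2 W by (simp add: unitary_mat_def)
qed

definition corner_block :: "complex \<Rightarrow> complex mat \<Rightarrow> complex mat" where
  "corner_block a B = mat (Suc (dim_row B)) (Suc (dim_col B))
     (\<lambda>(i,j). if i = 0 \<and> j = 0 then a else if i = 0 \<or> j = 0 then 0 else B $$ (i - 1, j - 1))"

lemma corner_block_carrier[simp]: "B \<in> carrier_mat m n \<Longrightarrow> corner_block a B \<in> carrier_mat (Suc m) (Suc n)"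
  by (simp add: corner_block_def)

lemma corner_block_dims[simp]:
  "dim_row (corner_block a B) = Suc (dim_row B)" "dim_col (corner_block a B) = Suc (dim_col B)"
  by (simp_all add: corner_block_def)

lemma index_corner_block[simp]:
  "i < Suc (dim_row B) \<Longrightarrow> j < Suc (dim_col B) \<Longrightarrow> corner_block a B $$ (i,j) =
    (if i = 0 \<and> j = 0 then a else if i = 0 \<or> j = 0 then 0 else B $$ (i - 1, j - 1))"
  by (simp add: corner_block_def)

lemma corner_block_mult:
  assumes A: "A \<in> carrier_mat m n" and B: "B \<in> carrier_mat n p"
  shows "corner_block a A * corner_block b B = corner_block (a * b) (A * B)"
proof (rule eq_matI)
  fix i j assume "i < dim_row (corner_block (a * b) (A * B))" "j < dim_col (corner_block (a * b) (A * B))"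
  hence i: "i < Suc m" and j: "j < Suc p" using A B by auto
  have "(corner_block a A * corner_block b B) $$ (i,j)
      = (\<Sum>k<Suc n. corner_block a A $$ (i,k) * corner_block b B $$ (k,j))"
    by (rule index_mult_mat_sum[OF corner_block_carrier[OF A] corner_block_carrier[OF B] i j])
  also have "\<dots> = corner_block a A $$ (i,0) * corner_block b B $$ (0,j)
      + (\<Sum>k<n. corner_block a A $$ (i,Suc k) * corner_block b B $$ (Suc k,j))"
    by (rule sum.lessThan_Suc_shift)
  also have "\<dots> = corner_block (a * b) (A * B) $$ (i,j)"
    using i j A B by (cases i; cases j) (auto simp: index_mult_mat_sum[OF A B] simp del: index_mult_mat(1))
  finally show "(corner_block a A * corner_block b B) $$ (i,j) = corner_block (a * b) (A * B) $$ (i,j)" .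
qed (use A B in auto)

lemma adj_corner_block: "B \<in> carrier_mat m n \<Longrightarrow> adj (corner_block a B) = corner_block (cnj a) (adj B)"
  by (rule eq_matI) (auto simp: index_corner_block)

lemma corner_block_one: "corner_block 1 (1\<^sub>m m) = 1\<^sub>m (Suc m)"
  by (rule eq_matI) (auto simp: index_corner_block)

lemma diagm_Suc: "diagm (Suc m) g = corner_block (g 0) (diagm m (\<lambda>i. g (Suc i)))"
  by (rule eq_matI) (auto simp: diagm_def)

lemma unitary_corner_block: "unitary_mat m U \<Longrightarrow> unitary_mat (Suc m) (corner_block 1 U)"
  by (auto simp: unitary_mat_def adj_corner_block corner_block_one
      corner_block_mult[of U m m "adj U" m] corner_block_mult[of "adj U" m m U m])

lemma corner_block_decompose:
  assumes B: "B \<in> carrier_mat (Suc m) (Suc m)"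
    and zero: "\<And>i. 0 < i \<Longrightarrow> i < Suc m \<Longrightarrow> B $$ (i,0) = 0 \<and> B $$ (0,i) = 0"
  shows "B = corner_block (B $$ (0,0)) (mat m m (\<lambda>(i,j). B $$ (Suc i, Suc j)))"
  by (rule eq_matI) (use B zero in \<open>auto simp: index_corner_block\<close>)

lemma corner_block_hermitian:
  assumes B: "B \<in> carrier_mat m m" and h: "adj (corner_block a B) = corner_block a B"
  shows "adj B = B"
proof (rule eq_matI)
  fix i j assume "i < dim_row B" "j < dim_col B"
  hence i: "i < m" and j: "j < m" using B by auto
  have "corner_block (cnj a) (adj B) $$ (Suc i, Suc j) = corner_block a B $$ (Suc i, Suc j)"
    using h by (simp add: adj_corner_block[OF B])
  thus "adj B $$ (i,j) = B $$ (i,j)" using B i j by (simp add: index_corner_block)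
qed (use B in auto)

lemma hermitian_unit_eigenvector:
  assumes A: "A \<in> carrier_mat (Suc m) (Suc m)" and h: "adj A = A"
  shows "\<exists>e u. u \<in> carrier_vec (Suc m) \<and> u \<bullet>c u = 1 \<and> A *\<^sub>v u = complex_of_real e \<cdot>\<^sub>v u"
proof -
  obtain e v where v: "v \<in> carrier_vec (Suc m)" "v \<noteq> 0\<^sub>v (Suc m)" "A *\<^sub>v v = e \<cdot>\<^sub>v v"
    using square_mat_has_eigenvector[OF A] by blast
  have vv: "v \<bullet>c v \<noteq> 0" using conjugate_square_eq_0_vec[OF v(1)] v(2) by auto
  define u where "u = normalize_vec v"
  have u: "u \<in> carrier_vec (Suc m)" "u \<bullet>c u = 1" using normalize_vec_norm[OF v(1) vv] v(1) by (auto simp: u_def)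
  have Au: "A *\<^sub>v u = e \<cdot>\<^sub>v u"
    unfolding u_def normalize_vec_def using v A by (intro eq_vecI) (auto simp: mult_mat_vec)
  have "e = (A *\<^sub>v u) \<bullet>c u" using Au u by (simp add: cscalar_smult_left[of _ "Suc m"])
  also have "\<dots> = u \<bullet>c (A *\<^sub>v u)" using adj_cscalar[OF A u(1) u(1)] h by simp
  also have "\<dots> = cnj e" using Au u by (simp add: cscalar_smult_right[of _ "Suc m"])
  finally have "e = complex_of_real (Re e)" by (simp add: complex_eq_iff)
  with u Au show ?thesis by metis
qed

lemma unitary_with_first_col:
  assumes u: "u \<in> carrier_vec (Suc m)" "u \<bullet>c u = 1"
  shows "\<exists>W. unitary_mat (Suc m) W \<and> col W 0 = u"
proof -
  obtain ws where ws: "length ws = Suc m" "set ws \<subseteq> carrier_vec (Suc m)" "ws ! 0 = u"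
    "\<forall>i<Suc m. \<forall>j<Suc m. ws ! i \<bullet>c ws ! j = (if i = j then 1 else 0)"
    using orthonormal_completion[OF u] by blast
  have "ws ! 0 \<in> carrier_vec (Suc m)" using ws(1,2) by auto
  hence "col (mat_of_cols (Suc m) ws) 0 = u" using ws(1,3) by (simp add: col_mat_of_cols)
  with unitary_mat_of_cols[OF ws(1,2,4)] show ?thesis by blast
qed

lemma hermitian_deflate:
  assumes A: "A \<in> carrier_mat (Suc m) (Suc m)" and h: "adj A = A"
    and W: "unitary_mat (Suc m) W" and eig: "A *\<^sub>v col W 0 = complex_of_real e \<cdot>\<^sub>v col W 0"
  shows "\<exists>A'. A' \<in> carrier_mat m m \<and> adj A' = A' \<and> adj W * A * W = corner_block (complex_of_real e) A'"
proof -
  let ?n = "Suc m" and ?B = "adj W * A * W"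
  have Wc: "W \<in> carrier_mat ?n ?n" and WW: "adj W * W = 1\<^sub>m ?n" using W by (auto simp: unitary_mat_def)
  have B: "?B \<in> carrier_mat ?n ?n" using A Wc by auto
  have Bh: "adj ?B = ?B"
    using A Wc h by (simp add: adj_mult[of _ ?n ?n _ ?n] assoc_mult_mat[of _ ?n ?n _ ?n _ ?n])
  have cW: "col W 0 \<in> carrier_vec ?n" using Wc by (auto intro: carrier_vecI)
  have col0: "col ?B 0 = complex_of_real e \<cdot>\<^sub>v Matrix.unit_vec ?n 0"
  proof -
    have "col ?B 0 = (adj W * A) *\<^sub>v col W 0" by (rule col_mult2) (use A Wc in auto)
    also have "\<dots> = adj W *\<^sub>v (A *\<^sub>v col W 0)" by (rule assoc_mult_mat_vec) (use A Wc cW in auto)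
    also have "\<dots> = complex_of_real e \<cdot>\<^sub>v col (adj W * W) 0"
      using Wc by (simp add: eig mult_mat_vec[OF adj_carrier[OF Wc] cW] col_mult2[OF adj_carrier[OF Wc] Wc])
    finally show ?thesis by (simp add: WW)
  qed
  have Bcol: "?B $$ (k,0) = (complex_of_real e \<cdot>\<^sub>v Matrix.unit_vec ?n 0) $ k" if "k < ?n" for k
    using that B by (metis col0 index_col carrier_matD zero_less_Suc)
  have zero: "?B $$ (i,0) = 0 \<and> ?B $$ (0,i) = 0" if "0 < i" "i < ?n" for i
  proof -
    have "?B $$ (i,0) = 0" using that by (simp add: Bcol)
    moreover have "?B $$ (0,i) = adj ?B $$ (0,i)" using Bh by simp
    moreover have "adj ?B $$ (0,i) = cnj (?B $$ (i,0))" by (rule adj_index) (use B that in auto)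
    ultimately show ?thesis by simp
  qed
  have B00: "?B $$ (0,0) = complex_of_real e" by (simp add: Bcol)
  define A' where "A' = mat m m (\<lambda>(i,j). ?B $$ (Suc i, Suc j))"
  have decomp: "?B = corner_block (complex_of_real e) A'"
    using corner_block_decompose[OF B zero] unfolding A'_def B00 .
  have A'c: "A' \<in> carrier_mat m m" by (simp add: A'_def)
  have "adj A' = A'" by (rule corner_block_hermitian[OF A'c Bh[unfolded decomp]])
  with decomp A'c show ?thesis by blast
qed

theorem hermitian_spectral_decomposition:
  assumes "A \<in> carrier_mat n n" "adj A = A"
  shows "\<exists>U d. unitary_mat n U \<and> A = U * diagm n (\<lambda>i. complex_of_real (d i)) * adj U"
  using assms
proof (induct n arbitrary: A)
  case 0
  show ?case
    by (rule exI[of _ "1\<^sub>m 0"], rule exI[of _ "\<lambda>_. 0"], rule conjI[OF unitary_one], rule eq_matI) (use 0 in auto)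
next
  case (Suc m A)
  let ?n = "Suc m"
  obtain e u where u: "u \<in> carrier_vec ?n" "u \<bullet>c u = 1" and Au: "A *\<^sub>v u = complex_of_real e \<cdot>\<^sub>v u"
    using hermitian_unit_eigenvector[OF Suc.prems] by blast
  obtain W where W: "unitary_mat ?n W" and Wu: "col W 0 = u" using unitary_with_first_col[OF u] by blast
  obtain A' where A': "A' \<in> carrier_mat m m" "adj A' = A'"
    and deflate: "adj W * A * W = corner_block (complex_of_real e) A'"
    using hermitian_deflate[OF Suc.prems W] Au Wu by blast
  obtain U d where U: "unitary_mat m U" and A'd: "A' = U * diagm m (\<lambda>i. complex_of_real (d i)) * adj U"
    using Suc.hyps[OF A'] by blast
  define d' where "d' i = (if i = 0 then e else d (i - 1))" for i
  define C where "C = W * corner_block 1 U"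
  have Wc: "W \<in> carrier_mat ?n ?n" and Uc: "U \<in> carrier_mat m m" using W U by (auto simp: unitary_mat_def)
  have "corner_block (complex_of_real e) A'
      = corner_block 1 U * diagm ?n (\<lambda>i. complex_of_real (d' i)) * adj (corner_block 1 U)"
    using Uc by (simp add: A'd diagm_Suc d'_def adj_corner_block corner_block_mult[of _ m m _ m])
  hence "A = W * (corner_block 1 U * diagm ?n (\<lambda>i. complex_of_real (d' i)) * adj (corner_block 1 U)) * adj W"
    using unitary_conj_cancel(1)[OF W Suc.prems(1)] deflate by simp
  also have "\<dots> = C * diagm ?n (\<lambda>i. complex_of_real (d' i)) * adj C"
    using Wc Uc by (simp add: C_def adj_mult[of _ ?n ?n _ ?n] assoc_mult_mat[of _ ?n ?n _ ?n _ ?n]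
        mult_carrier_mat[of _ ?n ?n _ ?n])
  finally show ?case using unitary_mult[OF W unitary_corner_block[OF U]] unfolding C_def by blast
qed

definition func_calc :: "complex mat \<Rightarrow> nat \<Rightarrow> (nat \<Rightarrow> complex) \<Rightarrow> complex mat" where
  "func_calc U n h = U * diagm n h * adj U"

lemma func_calc_carrier[simp]: "U \<in> carrier_mat n n \<Longrightarrow> func_calc U n h \<in> carrier_mat n n"
  unfolding func_calc_def by (intro mult_carrier_mat[of _ n n _ n] diagm_carrier adj_carrier) auto

lemma func_calc_dims: "U \<in> carrier_mat n n \<Longrightarrow> dim_row (func_calc U n h) = n \<and> dim_col (func_calc U n h) = n"
  using func_calc_carrier[of U n h] by (simp del: func_calc_carrier)

lemma index_func_calc: "U \<in> carrier_mat n n \<Longrightarrow> i < n \<Longrightarrow> j < n \<Longrightarrow>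
   func_calc U n h $$ (i,j) = (\<Sum>k<n. U$$(i,k) * h k * cnj (U$$(j,k)))"
  unfolding func_calc_def by (rule index_conj_diagm)

lemma func_calc_cong: "(\<And>i. i < n \<Longrightarrow> h i = k i) \<Longrightarrow> func_calc U n h = func_calc U n k"
proof -
  assume "\<And>i. i < n \<Longrightarrow> h i = k i"
  hence "diagm n h = diagm n k" by (intro eq_matI) auto
  thus ?thesis by (simp add: func_calc_def)
qed

lemma func_calc_add: assumes "U \<in> carrier_mat n n"
  shows "func_calc U n h + func_calc U n k = func_calc U n (\<lambda>i. h i + k i)"
proof (rule eq_matI)
  fix i j assume "i < dim_row (func_calc U n (\<lambda>i. h i + k i))" "j < dim_col (func_calc U n (\<lambda>i. h i + k i))"
  hence i: "i < n" and j: "j < n" using func_calc_dims[OF assms] by auto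
  have "(func_calc U n h + func_calc U n k) $$ (i,j) = func_calc U n h $$ (i,j) + func_calc U n k $$ (i,j)"
    using i j func_calc_dims[OF assms] by simp
  also have "\<dots> = (\<Sum>l<n. U$$(i,l) * h l * cnj (U$$(j,l)) + U$$(i,l) * k l * cnj (U$$(j,l)))"
    by (simp add: index_func_calc[OF assms i j] sum.distrib)
  also have "\<dots> = func_calc U n (\<lambda>i. h i + k i) $$ (i,j)"
    by (simp add: index_func_calc[OF assms i j] distrib_left distrib_right)
  finally show "(func_calc U n h + func_calc U n k) $$ (i,j) = func_calc U n (\<lambda>i. h i + k i) $$ (i,j)" .
qed (use func_calc_dims[OF assms] in auto)

lemma func_calc_mult: assumes U: "unitary_mat n U"
  shows "func_calc U n h * func_calc U n k = func_calc U n (\<lambda>i. h i * k i)"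
proof -
  have Uc: "U \<in> carrier_mat n n" and UU: "adj U * U = 1\<^sub>m n" using U by (auto simp: unitary_mat_def)
  have aU: "adj U \<in> carrier_mat n n" using Uc by simp
  note c = Uc aU diagm_carrier[of n h] diagm_carrier[of n k]
  have "func_calc U n h * func_calc U n k = U * diagm n h * (adj U * (U * diagm n k * adj U))"
    unfolding func_calc_def using c by (intro assoc_mult_mat) (auto intro!: mult_carrier_mat[of _ n n _ n])
  also have "adj U * (U * diagm n k * adj U) = (adj U * U) * (diagm n k * adj U)"
    using c by (simp add: assoc_mult_mat[of _ n n _ n _ n] mult_carrier_mat[of _ n n _ n])
  also have "\<dots> = diagm n k * adj U" using UU c by simp
  also have "U * diagm n h * (diagm n k * adj U) = U * (diagm n h * diagm n k) * adj U"
    using c by (simp add: assoc_mult_mat[of _ n n _ n _ n] mult_carrier_mat[of _ n n _ n])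
  finally show ?thesis by (simp add: func_calc_def diagm_mult)
qed

lemma func_calc_adj: assumes "U \<in> carrier_mat n n"
  shows "adj (func_calc U n h) = func_calc U n (\<lambda>i. cnj (h i))"
  using assms unfolding func_calc_def
  by (simp add: adj_mult[of _ n n _ n] mult_carrier_mat[of _ n n _ n] adj_diagm assoc_mult_mat[of _ n n _ n _ n])

lemma func_calc_one: assumes "unitary_mat n U" shows "func_calc U n (\<lambda>_. 1) = 1\<^sub>m n"
  using assms by (auto simp: func_calc_def diagm_one unitary_mat_def)

lemma func_calc_zero: assumes "U \<in> carrier_mat n n" shows "func_calc U n (\<lambda>_. 0) = 0\<^sub>m n n"
  by (rule eq_matI) (use assms func_calc_dims[OF assms] in \<open>auto simp: index_func_calc\<close>)

lemma func_calc_cscalar: assumes U: "U \<in> carrier_mat n n" and v: "v \<in> carrier_vec n"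
  shows "(func_calc U n h *\<^sub>v v) \<bullet>c v = (\<Sum>k<n. h k * ((adj U *\<^sub>v v) $ k * cnj ((adj U *\<^sub>v v) $ k)))"
proof -
  let ?y = "adj U *\<^sub>v v"
  have y: "?y \<in> carrier_vec n" by (rule mult_mat_vec_carrier[OF adj_carrier[OF U] v])
  have "func_calc U n h *\<^sub>v v = (U * diagm n h) *\<^sub>v ?y" unfolding func_calc_def using U v
    by (intro assoc_mult_mat_vec[of _ n n _ n]) (auto intro!: mult_carrier_mat[of _ n n _ n])
  also have "\<dots> = U *\<^sub>v (diagm n h *\<^sub>v ?y)" using U y
    by (intro assoc_mult_mat_vec[of _ n n _ n]) auto
  finally have "func_calc U n h *\<^sub>v v = U *\<^sub>v (diagm n h *\<^sub>v ?y)" .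
  hence "(func_calc U n h *\<^sub>v v) \<bullet>c v = (adj (adj U) *\<^sub>v (diagm n h *\<^sub>v ?y)) \<bullet>c v" by simp
  also have "\<dots> = (diagm n h *\<^sub>v ?y) \<bullet>c ?y"
    by (rule adj_cscalar[OF adj_carrier[OF U] mult_mat_vec_carrier[OF diagm_carrier y] v])
  also have "\<dots> = (\<Sum>k<n. (diagm n h *\<^sub>v ?y) $ k * cnj (?y $ k))"
    by (rule cscalar_prod_sum[OF mult_mat_vec_carrier[OF diagm_carrier y] y])
  also have "\<dots> = (\<Sum>k<n. h k * (?y $ k * cnj (?y $ k)))"
  proof (intro sum.cong refl)
    fix k assume k: "k \<in> {..<n}"
    have "(diagm n h *\<^sub>v ?y) $ k = (\<Sum>l<n. diagm n h $$ (k,l) * ?y $ l)"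
      by (rule index_mult_mat_vec_sum[OF diagm_carrier y]) (use k in auto)
    also have "\<dots> = (\<Sum>l<n. if k = l then h k * ?y $ l else 0)" using k by (intro sum.cong) auto
    also have "\<dots> = h k * ?y $ k" using k by simp
    finally show "(diagm n h *\<^sub>v ?y) $ k * cnj (?y $ k) = h k * (?y $ k * cnj (?y $ k))" by simp
  qed
  finally show ?thesis .
qed

lemma func_calc_psd: assumes U: "U \<in> carrier_mat n n" and v: "v \<in> carrier_vec n"
  and h: "\<And>k. k < n \<Longrightarrow> Im (h k) = 0 \<and> Re (h k) \<ge> 0"
  shows "Im ((func_calc U n h *\<^sub>v v) \<bullet>c v) = 0 \<and> Re ((func_calc U n h *\<^sub>v v) \<bullet>c v) \<ge> 0"
proof -
  have t: "Im (h k * (z * cnj z)) = 0 \<and> Re (h k * (z * cnj z)) \<ge> 0" if k: "k < n" for k z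
  proof -
    have hk: "h k = complex_of_real (Re (h k))" using h[OF k] by (simp add: complex_eq_iff)
    have "h k * (z * cnj z) = complex_of_real (Re (h k) * ((Re z)\<^sup>2 + (Im z)\<^sup>2))"
      by (subst hk, simp add: complex_mult_cnj)
    thus ?thesis using h[OF k] by simp
  qed
  let ?y = "adj U *\<^sub>v v"
  have "Im (\<Sum>k<n. h k * (?y $ k * cnj (?y $ k))) = (\<Sum>k<n. Im (h k * (?y $ k * cnj (?y $ k))))"
    by (rule Im_sum)
  also have "\<dots> = 0" by (rule sum.neutral) (use t in blast)
  finally have 1: "Im (\<Sum>k<n. h k * (?y $ k * cnj (?y $ k))) = 0" .
  have "Re (\<Sum>k<n. h k * (?y $ k * cnj (?y $ k))) = (\<Sum>k<n. Re (h k * (?y $ k * cnj (?y $ k))))"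
    by (rule Re_sum)
  also have "\<dots> \<ge> 0" by (rule sum_nonneg) (use t in blast)
  finally have 2: "Re (\<Sum>k<n. h k * (?y $ k * cnj (?y $ k))) \<ge> 0" .
  show ?thesis unfolding func_calc_cscalar[OF U v] using 1 2 by simp
qed

lemma diagm_commute_fun:
  assumes B: "B \<in> carrier_mat n n"
  and c: "B * diagm n (\<lambda>i. complex_of_real (d i)) = diagm n (\<lambda>i. complex_of_real (d i)) * B"
  shows "B * diagm n (\<lambda>i. g (d i)) = diagm n (\<lambda>i. g (d i)) * B"
proof (rule eq_matI)
  fix i j assume "i < dim_row (diagm n (\<lambda>i. g (d i)) * B)" "j < dim_col (diagm n (\<lambda>i. g (d i)) * B)"
  hence i: "i < n" and j: "j < n" using B by auto
  have "B $$ (i,j) * complex_of_real (d j) = complex_of_real (d i) * B $$ (i,j)"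
    using arg_cong[OF c, of "\<lambda>M. M $$ (i,j)"] index_mult_diagm[OF B i j] by simp
  hence "B $$ (i,j) = 0 \<or> d i = d j" by (auto simp: mult.commute)
  thus "(B * diagm n (\<lambda>i. g (d i))) $$ (i,j) = (diagm n (\<lambda>i. g (d i)) * B) $$ (i,j)"
    using index_mult_diagm[OF B i j] by auto
qed (use B in auto)

lemma func_calc_commute:
  assumes U: "unitary_mat n U" and A: "A \<in> carrier_mat n n"
  and comm: "A * func_calc U n (\<lambda>i. complex_of_real (d i)) = func_calc U n (\<lambda>i. complex_of_real (d i)) * A"
  shows "A * func_calc U n (\<lambda>i. g (d i)) = func_calc U n (\<lambda>i. g (d i)) * A"
proof -
  note Uf = unitary_matD[OF U]
  define A' where "A' = adj U * A * U"
  have A'c: "A' \<in> carrier_mat n n" unfolding A'_def using A Uf by (auto intro!: mult_carrier_mat[of _ n n _ n])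
  have fcd: "func_calc U n h = U * diagm n h * adj U" for h by (simp add: func_calc_def)
  have inv: "adj U * func_calc U n h * U = diagm n h" for h
    unfolding fcd using unitary_conj_cancel(2)[OF U diagm_carrier] .
  have "adj U * (A * func_calc U n (\<lambda>i. complex_of_real (d i))) * U = adj U * (func_calc U n (\<lambda>i. complex_of_real (d i)) * A) * U"
    using comm by simp
  hence "A' * diagm n (\<lambda>i. complex_of_real (d i)) = diagm n (\<lambda>i. complex_of_real (d i)) * A'"
    unfolding unitary_conj_adj_mult[OF U A func_calc_carrier[OF Uf[THEN conjunct2, THEN conjunct2]]]
      unitary_conj_adj_mult[OF U func_calc_carrier[OF Uf[THEN conjunct2, THEN conjunct2]] A] inv A'_def .
  hence c2: "A' * diagm n (\<lambda>i. g (d i)) = diagm n (\<lambda>i. g (d i)) * A'" by (rule diagm_commute_fun[OF A'c])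
  have AA: "A = U * A' * adj U" unfolding A'_def using unitary_conj_cancel(1)[OF U A] by simp
  have "A * func_calc U n (\<lambda>i. g (d i)) = U * (A' * diagm n (\<lambda>i. g (d i))) * adj U"
    unfolding AA fcd unitary_conj_mult[OF U A'c diagm_carrier] ..
  also have "\<dots> = U * (diagm n (\<lambda>i. g (d i)) * A') * adj U" using c2 by simp
  also have "\<dots> = func_calc U n (\<lambda>i. g (d i)) * A"
    unfolding AA fcd unitary_conj_mult[OF U diagm_carrier A'c] ..
  finally show ?thesis .
qed

lemma func_calc_psd_nonneg:
  assumes U: "unitary_mat n U"
  and psd: "\<And>v. v \<in> carrier_vec n \<Longrightarrow> Re ((func_calc U n (\<lambda>i. complex_of_real (d i)) *\<^sub>v v) \<bullet>c v) \<ge> 0"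
  and i: "i < n"
  shows "d i \<ge> 0"
proof -
  note Uf = unitary_matD[OF U]
  have Uc: "U \<in> carrier_mat n n" using Uf by simp
  let ?v = "col U i"
  have v: "?v \<in> carrier_vec n" using Uc by (intro carrier_vecI) auto
  have y: "adj U *\<^sub>v ?v = Matrix.unit_vec n i"
  proof -
    have "adj U *\<^sub>v ?v = col (adj U * U) i" using Uc i by (simp add: col_mult2[of _ n n _ n])
    also have "\<dots> = Matrix.unit_vec n i" using Uf i by simp
    finally show ?thesis .
  qed
  have "(func_calc U n (\<lambda>i. complex_of_real (d i)) *\<^sub>v ?v) \<bullet>c ?v
     = (\<Sum>k<n. complex_of_real (d k) * (Matrix.unit_vec n i $ k * cnj (Matrix.unit_vec n i $ k)))"
    unfolding func_calc_cscalar[OF Uc v] y ..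
  also have "\<dots> = (\<Sum>k<n. if k = i then complex_of_real (d i) else 0)"
    by (intro sum.cong) (auto simp: Matrix.unit_vec_def)
  also have "\<dots> = complex_of_real (d i)" using i by simp
  finally show ?thesis using psd[OF v] by simp
qed

definition mat_avg :: "'c set \<Rightarrow> ('c \<Rightarrow> complex mat) \<Rightarrow> nat \<Rightarrow> nat \<Rightarrow> complex mat" where
  "mat_avg S F k l = mat k l (\<lambda>(i,j). (\<Sum>c\<in>S. F c $$ (i,j)) / of_nat (card S))"

lemma mat_avg_carrier[simp]: "mat_avg S F k l \<in> carrier_mat k l"
  by (simp add: mat_avg_def)

lemma mat_avg_dims[simp]: "dim_row (mat_avg S F k l) = k" "dim_col (mat_avg S F k l) = l"
  by (simp_all add: mat_avg_def)

lemma index_mat_avg: "i < k \<Longrightarrow> j < l \<Longrightarrow> mat_avg S F k l $$ (i,j) = (\<Sum>c\<in>S. F c $$ (i,j)) / of_nat (card S)"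
  by (simp add: mat_avg_def)

lemma mat_avg_mult_vec:
  assumes F: "\<And>c. c \<in> S \<Longrightarrow> F c \<in> carrier_mat k l" and v: "v \<in> carrier_vec l"
  shows "mat_avg S F k l *\<^sub>v v = vec k (\<lambda>i. (\<Sum>c\<in>S. (F c *\<^sub>v v) $ i) / of_nat (card S))"
proof (rule eq_vecI)
  fix i assume "i < dim_vec (vec k (\<lambda>i. (\<Sum>c\<in>S. (F c *\<^sub>v v) $ i) / of_nat (card S)))"
  hence i: "i < k" by simp
  have "(mat_avg S F k l *\<^sub>v v) $ i = (\<Sum>j<l. mat_avg S F k l $$ (i,j) * v $ j)"
    by (rule index_mult_mat_vec_sum[OF mat_avg_carrier v i])
  also have "\<dots> = (\<Sum>j<l. (\<Sum>c\<in>S. F c $$ (i,j) * v $ j)) / of_nat (card S)"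
    using i by (simp add: index_mat_avg sum_divide_distrib sum_distrib_right)
  also have "\<dots> = (\<Sum>c\<in>S. (\<Sum>j<l. F c $$ (i,j) * v $ j)) / of_nat (card S)"
    by (subst sum.swap) simp
  also have "\<dots> = (\<Sum>c\<in>S. (F c *\<^sub>v v) $ i) / of_nat (card S)"
    by (intro arg_cong[where f = "\<lambda>x. x / _"] sum.cong refl, rule index_mult_mat_vec_sum[symmetric], rule F) (use v i in auto)
  finally show "(mat_avg S F k l *\<^sub>v v) $ i = vec k (\<lambda>i. (\<Sum>c\<in>S. (F c *\<^sub>v v) $ i) / of_nat (card S)) $ i"
    using i by simp
qed simp

lemma mat_avg_cscalar:
  assumes F: "\<And>c. c \<in> S \<Longrightarrow> F c \<in> carrier_mat k l" and v: "v \<in> carrier_vec l" and w: "w \<in> carrier_vec k"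
  shows "(mat_avg S F k l *\<^sub>v v) \<bullet>c w = (\<Sum>c\<in>S. (F c *\<^sub>v v) \<bullet>c w) / of_nat (card S)"
proof -
  have e: "mat_avg S F k l *\<^sub>v v = vec k (\<lambda>i. (\<Sum>c\<in>S. (F c *\<^sub>v v) $ i) / of_nat (card S))"
    by (rule mat_avg_mult_vec[OF F v])
  have "(mat_avg S F k l *\<^sub>v v) \<bullet>c w = vec k (\<lambda>i. (\<Sum>c\<in>S. (F c *\<^sub>v v) $ i) / of_nat (card S)) \<bullet>c w"
    by (simp only: e)
  also have "\<dots> = (\<Sum>i<k. (\<Sum>c\<in>S. (F c *\<^sub>v v) $ i) / of_nat (card S) * cnj (w $ i))"
    using w by (subst cscalar_prod_sum[of _ k]) auto
  also have "\<dots> = (\<Sum>c\<in>S. (\<Sum>i<k. (F c *\<^sub>v v) $ i * cnj (w $ i))) / of_nat (card S)"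
    by (simp add: sum_divide_distrib sum_distrib_right sum.swap[of _ "{..<k}"])
  also have "\<dots> = (\<Sum>c\<in>S. (F c *\<^sub>v v) \<bullet>c w) / of_nat (card S)"
    by (intro arg_cong[where f = "\<lambda>x. x / _"] sum.cong refl, rule cscalar_prod_sum[symmetric, of _ k],
        rule mult_mat_vec_carrier[OF F v], auto simp: w)
  finally show ?thesis .
qed

lemma mult_mat_avg_left:
  assumes A: "A \<in> carrier_mat p k" and F: "\<And>c. c \<in> S \<Longrightarrow> F c \<in> carrier_mat k l"
  shows "A * mat_avg S F k l = mat_avg S (\<lambda>c. A * F c) p l"
proof (rule eq_matI)
  fix i j assume "i < dim_row (mat_avg S (\<lambda>c. A * F c) p l)" "j < dim_col (mat_avg S (\<lambda>c. A * F c) p l)"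
  hence i: "i < p" and j: "j < l" by auto
  have "(A * mat_avg S F k l) $$ (i,j) = (\<Sum>m<k. A $$ (i,m) * mat_avg S F k l $$ (m,j))"
    by (rule index_mult_mat_sum[OF A mat_avg_carrier i j])
  also have "\<dots> = (\<Sum>c\<in>S. (\<Sum>m<k. A $$ (i,m) * F c $$ (m,j))) / of_nat (card S)"
    using j by (simp add: index_mat_avg sum_divide_distrib sum_distrib_left sum.swap[of _ "{..<k}"] mult.assoc)
  also have "\<dots> = mat_avg S (\<lambda>c. A * F c) p l $$ (i,j)"
    using i j A F by (simp add: index_mat_avg index_mult_mat_sum[of _ p k _ l])
  finally show "(A * mat_avg S F k l) $$ (i,j) = mat_avg S (\<lambda>c. A * F c) p l $$ (i,j)" .
qed (use A in auto)

lemma mult_mat_avg_right: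
  assumes B: "B \<in> carrier_mat l q" and F: "\<And>c. c \<in> S \<Longrightarrow> F c \<in> carrier_mat k l"
  shows "mat_avg S F k l * B = mat_avg S (\<lambda>c. F c * B) k q"
proof (rule eq_matI)
  fix i j assume "i < dim_row (mat_avg S (\<lambda>c. F c * B) k q)" "j < dim_col (mat_avg S (\<lambda>c. F c * B) k q)"
  hence i: "i < k" and j: "j < q" by auto
  have "(mat_avg S F k l * B) $$ (i,j) = (\<Sum>m<l. mat_avg S F k l $$ (i,m) * B $$ (m,j))"
    by (rule index_mult_mat_sum[OF mat_avg_carrier B i j])
  also have "\<dots> = (\<Sum>c\<in>S. (\<Sum>m<l. F c $$ (i,m) * B $$ (m,j))) / of_nat (card S)"
    using i by (simp add: index_mat_avg sum_divide_distrib sum_distrib_right sum.swap[of _ "{..<l}"])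
  also have "\<dots> = mat_avg S (\<lambda>c. F c * B) k q $$ (i,j)"
    using i j B F by (simp add: index_mat_avg index_mult_mat_sum[of _ k l _ q])
  finally show "(mat_avg S F k l * B) $$ (i,j) = mat_avg S (\<lambda>c. F c * B) k q $$ (i,j)" .
qed (use B in auto)

lemma adj_mat_avg:
  assumes F: "\<And>c. c \<in> S \<Longrightarrow> F c \<in> carrier_mat k l"
  shows "adj (mat_avg S F k l) = mat_avg S (\<lambda>c. adj (F c)) l k"
proof (rule eq_matI)
  fix i j assume "i < dim_row (mat_avg S (\<lambda>c. adj (F c)) l k)" "j < dim_col (mat_avg S (\<lambda>c. adj (F c)) l k)"
  hence i: "i < l" and j: "j < k" by auto
  have "(\<Sum>c\<in>S. adj (F c) $$ (i,j)) = (\<Sum>c\<in>S. cnj (F c $$ (j,i)))"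
  proof (intro sum.cong refl)
    fix c assume "c \<in> S"
    hence "F c \<in> carrier_mat k l" by (rule F)
    thus "adj (F c) $$ (i,j) = cnj (F c $$ (j,i))" using i j by simp
  qed
  thus "adj (mat_avg S F k l) $$ (i,j) = mat_avg S (\<lambda>c. adj (F c)) l k $$ (i,j)"
    using i j by (simp add: index_mat_avg cnj_sum)
qed auto

lemma mat_avg_cong: "(\<And>c. c \<in> S \<Longrightarrow> F c = F' c) \<Longrightarrow> mat_avg S F k l = mat_avg S F' k l"
  by (simp add: mat_avg_def cong: sum.cong)

lemma mat_avg_reindex: "bij_betw h S S \<Longrightarrow> mat_avg S (\<lambda>c. F (h c)) k l = mat_avg S F k l"
proof (rule eq_matI)
  fix i j assume "i < dim_row (mat_avg S F k l)" "j < dim_col (mat_avg S F k l)"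
  hence i: "i < k" and j: "j < l" by auto
  assume "bij_betw h S S"
  from sum.reindex_bij_betw[OF this, of "\<lambda>c. F c $$ (i,j)"]
  show "mat_avg S (\<lambda>c. F (h c)) k l $$ (i,j) = mat_avg S F k l $$ (i,j)" using i j by (simp add: index_mat_avg)
qed auto

lemma (in group) bij_betw_mult_left: "g \<in> carrier G \<Longrightarrow> bij_betw (\<lambda>c. g \<otimes> c) (carrier G) (carrier G)"
  by (rule bij_betwI[where g = "\<lambda>c. inv g \<otimes> c"]) (auto simp: m_assoc[symmetric])

lemma (in group) bij_betw_inv_mult: "b \<in> carrier G \<Longrightarrow> bij_betw (\<lambda>c. inv c \<otimes> b) (carrier G) (carrier G)"
proof (rule bij_betwI[where g = "\<lambda>y. b \<otimes> inv y"])
  assume b: "b \<in> carrier G"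
  show "(\<lambda>c. inv c \<otimes> b) \<in> carrier G \<rightarrow> carrier G" using b by auto
  show "(\<lambda>y. b \<otimes> inv y) \<in> carrier G \<rightarrow> carrier G" using b by auto
  fix x assume x: "x \<in> carrier G"
  show "b \<otimes> inv (inv x \<otimes> b) = x" using b x by (simp add: inv_mult_group m_assoc[symmetric])
  show "inv (b \<otimes> inv x) \<otimes> b = x" using b x by (simp add: inv_mult_group m_assoc)
qed

definition vec_comb :: "nat \<Rightarrow> 'i set \<Rightarrow> ('i \<Rightarrow> complex) \<Rightarrow> ('i \<Rightarrow> complex vec) \<Rightarrow> complex vec" where
  "vec_comb n S c v = vec n (\<lambda>r. \<Sum>x\<in>S. c x * v x $ r)"

lemma vec_comb_carrier[simp]: "vec_comb n S c v \<in> carrier_vec n" by (simp add: vec_comb_def)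
lemma vec_comb_dim[simp]: "dim_vec (vec_comb n S c v) = n" by (simp add: vec_comb_def)
lemma index_vec_comb: "r < n \<Longrightarrow> vec_comb n S c v $ r = (\<Sum>x\<in>S. c x * v x $ r)" by (simp add: vec_comb_def)

lemma mat_vec_comb:
  assumes M: "M \<in> carrier_mat m n" and v: "\<And>x. x \<in> S \<Longrightarrow> v x \<in> carrier_vec n"
  shows "M *\<^sub>v vec_comb n S c v = vec_comb m S c (\<lambda>x. M *\<^sub>v v x)"
proof (rule eq_vecI)
  fix r assume "r < dim_vec (vec_comb m S c (\<lambda>x. M *\<^sub>v v x))"
  hence r: "r < m" by simp
  have "(M *\<^sub>v vec_comb n S c v) $ r = (\<Sum>k<n. M $$ (r,k) * (\<Sum>x\<in>S. c x * v x $ k))"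
    by (rule trans[OF index_mult_mat_vec_sum[OF M vec_comb_carrier r]], intro sum.cong refl, simp add: index_vec_comb)
  also have "\<dots> = (\<Sum>x\<in>S. c x * (\<Sum>k<n. M $$ (r,k) * v x $ k))"
    by (simp add: sum_distrib_left sum.swap[of _ "{..<n}"] mult_ac)
  also have "\<dots> = vec_comb m S c (\<lambda>x. M *\<^sub>v v x) $ r"
    unfolding index_vec_comb[OF r] by (intro sum.cong refl, subst index_mult_mat_vec_sum[OF M v r], auto)
  finally show "(M *\<^sub>v vec_comb n S c v) $ r = vec_comb m S c (\<lambda>x. M *\<^sub>v v x) $ r" .
qed (use M in auto)

lemma vec_comb_vec_comb:
  assumes "finite T"
  shows "vec_comb n S c (\<lambda>x. vec_comb n T e (v x)) = vec_comb n (S \<times> T) (\<lambda>(x,y). c x * e y) (\<lambda>(x,y). v x y)"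
proof (rule eq_vecI)
  fix r assume "r < dim_vec (vec_comb n (S \<times> T) (\<lambda>(x,y). c x * e y) (\<lambda>(x,y). v x y))"
  hence r: "r < n" by simp
  show "vec_comb n S c (\<lambda>x. vec_comb n T e (v x)) $ r = vec_comb n (S \<times> T) (\<lambda>(x,y). c x * e y) (\<lambda>(x,y). v x y) $ r"
    using r by (simp add: index_vec_comb sum.cartesian_product split_def sum_distrib_left mult.assoc)
qed simp

lemma vec_comb_reindex: assumes "bij_betw h S S'" shows "vec_comb n S (\<lambda>x. c (h x)) (\<lambda>x. v (h x)) = vec_comb n S' c v"
proof (rule eq_vecI)
  fix r assume "r < dim_vec (vec_comb n S' c v)"
  hence r: "r < n" by simp
  show "vec_comb n S (\<lambda>x. c (h x)) (\<lambda>x. v (h x)) $ r = vec_comb n S' c v $ r"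
    using sum.reindex_bij_betw[OF assms, of "\<lambda>x. c x * v x $ r"] r by (simp add: index_vec_comb)
qed simp

lemma vec_comb_cong: "S = S' \<Longrightarrow> (\<And>x. x \<in> S \<Longrightarrow> c x = c' x) \<Longrightarrow> (\<And>x. x \<in> S \<Longrightarrow> v x = v' x) \<Longrightarrow> vec_comb n S c v = vec_comb n S' c' v'"
  unfolding vec_comb_def by (intro eq_vecI) auto

lemma vec_comb_kron:
  assumes B: "B \<in> carrier_mat D D" and A: "A \<in> carrier_mat d d"
  shows "vec_comb n (({..<D}\<times>{..<D})\<times>({..<d}\<times>{..<d}))
      (\<lambda>((I,J),(i,j)). B $$ (I,J) * A $$ (i,j)) (\<lambda>((I,J),(i,j)). v (I*d+i, J*d+j))
    = vec_comb n ({..<D*d}\<times>{..<D*d}) (\<lambda>(I,J). kron B A $$ (I,J)) v"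
proof -
  let ?h = "\<lambda>((I,J),(i,j)). (I*d+i, J*d+j)"
  have "vec_comb n (({..<D}\<times>{..<D})\<times>({..<d}\<times>{..<d}))
      (\<lambda>((I,J),(i,j)). B $$ (I,J) * A $$ (i,j)) (\<lambda>((I,J),(i,j)). v (I*d+i, J*d+j))
    = vec_comb n (({..<D}\<times>{..<D})\<times>({..<d}\<times>{..<d})) (\<lambda>z. (\<lambda>(I,J). kron B A $$ (I,J)) (?h z)) (\<lambda>z. v (?h z))"
    by (rule vec_comb_cong) (auto simp: kron_index_pair[OF B A])
  also have "\<dots> = vec_comb n ({..<D*d}\<times>{..<D*d}) (\<lambda>(I,J). kron B A $$ (I,J)) v"
    by (rule vec_comb_reindex[OF pair_bij])
  finally show ?thesis .
qed

section \<open>Expansion of the adaptive state\<close>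

lemma adaptive_state_unit:
  assumes "\<psi> \<in> carrier_vec n" "\<forall>i\<in>{1..k}. unitary_mat n (U i)" "unitary_mat n Or"
  shows "adaptive_state Or U k \<psi> \<bullet>c adaptive_state Or U k \<psi> = \<psi> \<bullet>c \<psi> \<and> adaptive_state Or U k \<psi> \<in> carrier_vec n"
  using assms
proof (induct k)
  case 0 thus ?case by simp
next
  case (Suc k)
  have IH: "adaptive_state Or U k \<psi> \<bullet>c adaptive_state Or U k \<psi> = \<psi> \<bullet>c \<psi>" "adaptive_state Or U k \<psi> \<in> carrier_vec n"
    using Suc by auto
  have Uk: "unitary_mat n (U (Suc k))" using Suc.prems by auto
  have Oc: "Or \<in> carrier_mat n n" using Suc.prems by (simp add: unitary_mat_def)
  have Uc: "U (Suc k) \<in> carrier_mat n n" using Uk by (simp add: unitary_mat_def)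
  have c1: "Or *\<^sub>v adaptive_state Or U k \<psi> \<in> carrier_vec n" using Oc IH by simp
  show ?case using unitary_cscalar_self[OF Uk c1] unitary_cscalar_self[OF Suc.prems(3) IH(2)] IH Uc c1 by simp
qed

definition mat_unit :: "nat \<Rightarrow> nat \<Rightarrow> nat \<Rightarrow> complex mat" where
  "mat_unit d i j = mat d d (\<lambda>(p,q). if p = i \<and> q = j then 1 else 0)"

definition oracle_unit :: "nat \<Rightarrow> nat \<Rightarrow> nat \<Rightarrow> nat \<Rightarrow> complex mat" where
  "oracle_unit d N i j = kron (mat_unit d i j) (1\<^sub>m N)"

lemma oracle_unit_carrier[simp]: "oracle_unit d N i j \<in> carrier_mat (d*N) (d*N)"
  unfolding oracle_unit_def mat_unit_def by (rule kron_carrier) auto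

lemma index_oracle_unit:
  assumes "i < d" "j < d" "r < d*N" "r' < d*N"
  shows "oracle_unit d N i j $$ (r,r') = (if r div N = i \<and> r' div N = j \<and> r mod N = r' mod N then 1 else 0)"
proof -
  have "N > 0" using assms(3) by (cases N) auto
  thus ?thesis unfolding oracle_unit_def using assms
    by (subst kron_index[of _ d d _ N N]) (auto simp: mat_unit_def less_mult_imp_div_less mult.commute)
qed

lemma index_kron_one_sum_oracle_unit:
  assumes A: "A \<in> carrier_mat d d" and r: "r < d*N" "r' < d*N"
  shows "kron A (1\<^sub>m N) $$ (r,r') = (\<Sum>(i,j)\<in>{..<d}\<times>{..<d}. A $$ (i,j) * oracle_unit d N i j $$ (r,r'))"
proof -
  have N0: "N > 0" using r by (cases N) auto
  have rd: "r div N < d" "r' div N < d" using r by (simp_all add: less_mult_imp_div_less mult.commute)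
  have "(\<Sum>(i,j)\<in>{..<d}\<times>{..<d}. A $$ (i,j) * oracle_unit d N i j $$ (r,r'))
      = (\<Sum>x\<in>{..<d}\<times>{..<d}. if x = (r div N, r' div N)
           then A $$ (r div N, r' div N) * (if r mod N = r' mod N then 1 else 0) else 0)"
    using r by (intro sum.cong refl) (auto simp: index_oracle_unit split: if_splits)
  also have "\<dots> = kron A (1\<^sub>m N) $$ (r,r')"
    using rd r N0 by (simp add: kron_index[OF A one_carrier_mat])
  finally show ?thesis by simp
qed

lemma kron_one_mult_vec_comb:
  assumes A: "A \<in> carrier_mat d d" and x: "x \<in> carrier_vec (d*N)"
  shows "kron A (1\<^sub>m N) *\<^sub>v x = vec_comb (d*N) ({..<d}\<times>{..<d}) (\<lambda>(i,j). A $$ (i,j)) (\<lambda>(i,j). oracle_unit d N i j *\<^sub>v x)"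
proof (rule eq_vecI)
  fix r assume "r < dim_vec (vec_comb (d*N) ({..<d}\<times>{..<d}) (\<lambda>(i,j). A $$ (i,j)) (\<lambda>(i,j). oracle_unit d N i j *\<^sub>v x))"
  hence r: "r < d*N" by simp
  have "(kron A (1\<^sub>m N) *\<^sub>v x) $ r = (\<Sum>r'<d*N. kron A (1\<^sub>m N) $$ (r,r') * x $ r')"
    using A by (intro index_mult_mat_vec_sum[OF _ x r]) auto
  also have "\<dots> = (\<Sum>r'<d*N. \<Sum>(i,j)\<in>{..<d}\<times>{..<d}. A $$ (i,j) * (oracle_unit d N i j $$ (r,r') * x $ r'))"
    using r by (intro sum.cong refl) (simp add: index_kron_one_sum_oracle_unit[OF A] sum_distrib_right case_prod_beta mult.assoc)
  also have "\<dots> = (\<Sum>(i,j)\<in>{..<d}\<times>{..<d}. A $$ (i,j) * (\<Sum>r'<d*N. oracle_unit d N i j $$ (r,r') * x $ r'))"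
    by (subst sum.swap) (simp add: sum_distrib_left case_prod_beta)
  also have "\<dots> = vec_comb (d*N) ({..<d}\<times>{..<d}) (\<lambda>(i,j). A $$ (i,j)) (\<lambda>(i,j). oracle_unit d N i j *\<^sub>v x) $ r"
    unfolding index_vec_comb[OF r] by (intro sum.cong refl) (auto simp: index_mult_mat_vec_sum[OF oracle_unit_carrier x r])
  finally show "(kron A (1\<^sub>m N) *\<^sub>v x) $ r = \<dots>" .
qed (use assms in auto)

text \<open>\<open>branch_vec d N U \<psi> k (I,J)\<close> is the state reached when the \<open>m\<close>-th query is replaced by the
  matrix unit \<open>e\<^sub>i\<^sub>j \<otimes> I\<close> whose indices \<open>i\<close>, \<open>j\<close> are the \<open>m\<close>-th base-\<open>d\<close> digits of \<open>I\<close>, \<open>J\<close>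
  (most significant first), matching the index order of \<open>tpow\<close>.\<close>

fun branch_vec :: "nat \<Rightarrow> nat \<Rightarrow> (nat \<Rightarrow> complex mat) \<Rightarrow> complex vec \<Rightarrow> nat \<Rightarrow> nat \<times> nat \<Rightarrow> complex vec" where
  "branch_vec d N U \<psi> 0 IJ = \<psi>"
| "branch_vec d N U \<psi> (Suc k) PQ = U (Suc k) *\<^sub>v (oracle_unit d N (fst PQ mod d) (snd PQ mod d) *\<^sub>v branch_vec d N U \<psi> k (fst PQ div d, snd PQ div d))"

lemma branch_vec_carrier:
  assumes "\<psi> \<in> carrier_vec (d*N)" "\<forall>i\<in>{1..k}. U i \<in> carrier_mat (d*N) (d*N)"
  shows "branch_vec d N U \<psi> k PQ \<in> carrier_vec (d*N)"
  using assms by (induct k arbitrary: PQ) (auto intro!: mult_mat_vec_carrier[of _ "d*N" "d*N"])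

theorem adaptive_state_expansion:
  assumes A: "A \<in> carrier_mat d d" and psi: "\<psi> \<in> carrier_vec (d*N)" and U: "\<forall>i\<in>{1..k}. U i \<in> carrier_mat (d*N) (d*N)"
  shows "adaptive_state (kron A (1\<^sub>m N)) U k \<psi> = vec_comb (d*N) ({..<d^k}\<times>{..<d^k}) (\<lambda>(I,J). tpow A k $$ (I,J)) (branch_vec d N U \<psi> k)"
  using U
proof (induct k)
  case 0
  have "{..<d^0}\<times>{..<d^0} = {(0::nat,0::nat)}" by auto
  thus ?case using psi by (intro eq_vecI) (auto simp: index_vec_comb)
next
  case (Suc k)
  let ?n = "d*N" and ?D = "d^k"
  have Uk: "\<forall>i\<in>{1..k}. U i \<in> carrier_mat ?n ?n" using Suc.prems by auto
  have USk: "U (Suc k) \<in> carrier_mat ?n ?n" using Suc.prems by auto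
  have O: "kron A (1\<^sub>m N) \<in> carrier_mat ?n ?n" using A by simp
  have wc: "\<And>PQ. branch_vec d N U \<psi> k PQ \<in> carrier_vec ?n" by (rule branch_vec_carrier[OF psi Uk])
  let ?S = "{..<?D}\<times>{..<?D}" and ?S' = "{..<d}\<times>{..<d}"
  let ?\<rho> = "\<lambda>(I,J). tpow A k $$ (I,J)" and ?a = "\<lambda>(i,j). A $$ (i,j)"
  have "adaptive_state (kron A (1\<^sub>m N)) U (Suc k) \<psi> = U (Suc k) *\<^sub>v (kron A (1\<^sub>m N) *\<^sub>v vec_comb ?n ?S ?\<rho> (branch_vec d N U \<psi> k))"
    using Suc.hyps[OF Uk] by simp
  also have "kron A (1\<^sub>m N) *\<^sub>v vec_comb ?n ?S ?\<rho> (branch_vec d N U \<psi> k) = vec_comb ?n ?S ?\<rho> (\<lambda>IJ. kron A (1\<^sub>m N) *\<^sub>v branch_vec d N U \<psi> k IJ)"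
    by (rule mat_vec_comb[OF O wc])
  also have "\<dots> = vec_comb ?n ?S ?\<rho> (\<lambda>IJ. vec_comb ?n ?S' ?a (\<lambda>(i,j). oracle_unit d N i j *\<^sub>v branch_vec d N U \<psi> k IJ))"
    by (rule vec_comb_cong) (auto simp: kron_one_mult_vec_comb[OF A wc])
  also have "\<dots> = vec_comb ?n (?S \<times> ?S') (\<lambda>(x,y). ?\<rho> x * ?a y) (\<lambda>(x,y). (case y of (i,j) \<Rightarrow> oracle_unit d N i j *\<^sub>v branch_vec d N U \<psi> k x))"
    by (rule vec_comb_vec_comb) auto
  also have "U (Suc k) *\<^sub>v \<dots> = vec_comb ?n (?S \<times> ?S') (\<lambda>((I,J),(i,j)). tpow A k $$ (I,J) * A $$ (i,j))
        (\<lambda>((I,J),(i,j)). branch_vec d N U \<psi> (Suc k) (I*d+i, J*d+j))"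
    by (subst mat_vec_comb[OF USk]) (auto intro!: vec_comb_cong mult_mat_vec_carrier[OF oracle_unit_carrier] wc)
  also have "\<dots> = vec_comb ?n ({..<d ^ Suc k}\<times>{..<d ^ Suc k}) (\<lambda>(I,J). tpow A (Suc k) $$ (I,J)) (branch_vec d N U \<psi> (Suc k))"
    unfolding vec_comb_kron[OF tpow_carrier[OF A, of k] A] by (simp add: mult.commute)
  finally show ?case .
qed

lemma unitary_rep_one_inv:
  fixes G :: "('g, 'b) monoid_scheme" (structure)
  assumes grp: "group G" and rep: "unitary_rep G d \<pi>"
  shows "\<pi> \<one>\<^bsub>G\<^esub> = 1\<^sub>m d" "\<And>a. a \<in> carrier G \<Longrightarrow> \<pi> (inv\<^bsub>G\<^esub> a) = adj (\<pi> a)"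
proof -
  interpret group G by (rule grp)
  have u: "\<And>a. a \<in> carrier G \<Longrightarrow> unitary_mat d (\<pi> a)" and h: "\<And>a b. a \<in> carrier G \<Longrightarrow> b \<in> carrier G \<Longrightarrow> \<pi> (a \<otimes> b) = \<pi> a * \<pi> b"
    using rep by (auto simp: unitary_rep_def)
  have c: "\<And>a. a \<in> carrier G \<Longrightarrow> \<pi> a \<in> carrier_mat d d" using u by (simp add: unitary_mat_def)
  have "\<pi> \<one> = \<pi> \<one> * \<pi> \<one>" using h[of \<one> \<one>] by simp
  hence "adj (\<pi> \<one>) * \<pi> \<one> = adj (\<pi> \<one>) * (\<pi> \<one> * \<pi> \<one>)" by simp
  also have "\<dots> = (adj (\<pi> \<one>) * \<pi> \<one>) * \<pi> \<one>" using c[of \<one>] by (simp add: assoc_mult_mat[of _ d d _ d _ d])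
  finally show one: "\<pi> \<one> = 1\<^sub>m d" using u[of \<one>] c[of \<one>] by (simp add: unitary_mat_def)
  fix a assume a: "a \<in> carrier G"
  have "\<pi> a * \<pi> (inv a) = 1\<^sub>m d" using h[of a "inv a"] a one by simp
  hence "adj (\<pi> a) * (\<pi> a * \<pi> (inv a)) = adj (\<pi> a)" using right_mult_one_mat[OF adj_carrier[OF c[OF a]]] by simp
  also have "adj (\<pi> a) * (\<pi> a * \<pi> (inv a)) = (adj (\<pi> a) * \<pi> a) * \<pi> (inv a)"
    using a c by (simp add: assoc_mult_mat[of _ d d _ d _ d])
  also have "\<dots> = \<pi> (inv a)" using u[OF a] left_mult_one_mat[OF c[OF inv_closed[OF a]]] by (simp add: unitary_mat_def)
  finally show "\<pi> (inv a) = adj (\<pi> a)" .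
qed

section \<open>From adaptive to nonadaptive algorithms\<close>

locale adaptive_algorithm =
  fixes G :: "('g, 'b) monoid_scheme" (structure)
    and d N t :: nat and \<pi> :: "'g \<Rightarrow> complex mat" and U :: "nat \<Rightarrow> complex mat" and \<psi> :: "complex vec"
    and E :: "'x \<Rightarrow> complex mat" and X :: "'x set" and act :: "'g \<Rightarrow> 'x \<Rightarrow> 'x" and f :: "'g \<Rightarrow> 'x"
  assumes grp: "group G" and fin: "finite (carrier G)" and rep: "unitary_rep G d \<pi>"
    and ci: "coset_identification G X act f"
    and psi: "unit_vec (d*N) \<psi>" and Uu: "\<forall>i\<in>{1..t}. unitary_mat (d*N) (U i)"
    and Ep: "povm (d*N) X E"
begin

sublocale group G by (rule grp)

abbreviation "nd \<equiv> d * N"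
abbreviation "Dt \<equiv> d ^ t"
abbreviation "mt \<equiv> Dt * Dt"

text \<open>\<open>Phi c\<close> sends \<open>e\<^sub>K \<otimes> e\<^sub>J\<close> to \<open>\<Sum>\<^sub>I \<rho>(c\<inverse>)\<^sub>I\<^sub>K w\<^sub>I\<^sub>J\<close>; this is what makes \<open>Phi c \<phi> = \<psi>a (c\<inverse>)\<close>
  for the unnormalised maximally entangled vector \<open>\<phi>\<close>, and \<open>Phi c \<circ> R g = Phi (g\<inverse> c)\<close>.\<close>

definition "\<rho> a = tpow (\<pi> a) t"
definition "\<psi>a a = adaptive_state (kron (\<pi> a) (1\<^sub>m N)) U t \<psi>"
definition "w = branch_vec d N U \<psi> t"
definition "Phi c = mat nd mt (\<lambda>(r,q). \<Sum>I<Dt. \<rho> (inv c) $$ (I, q div Dt) * (w (I, q mod Dt) $ r))"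
definition "\<phi> = vec mt (\<lambda>q. if q div Dt = q mod Dt then 1 else (0::complex))"
definition "R g = kron (\<rho> g) (1\<^sub>m Dt)"

lemma pi_unitary: "a \<in> carrier G \<Longrightarrow> unitary_mat d (\<pi> a)" using rep by (simp add: unitary_rep_def)
lemma pi_carrier: "a \<in> carrier G \<Longrightarrow> \<pi> a \<in> carrier_mat d d" using pi_unitary by (simp add: unitary_mat_def)
lemma pi_hom: "a \<in> carrier G \<Longrightarrow> b \<in> carrier G \<Longrightarrow> \<pi> (a \<otimes> b) = \<pi> a * \<pi> b" using rep by (simp add: unitary_rep_def)
lemma psi_carrier: "\<psi> \<in> carrier_vec nd" and psi_norm: "\<psi> \<bullet>c \<psi> = 1" using psi by (auto simp: unit_vec_def)

lemma d_pos: "d > 0"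
  using unit_vec_dim_pos[OF psi] by (cases d) auto

lemma D_pos: "Dt > 0" using d_pos by simp
lemma U_carrier: "\<forall>i\<in>{1..t}. U i \<in> carrier_mat nd nd" using Uu by (simp add: unitary_mat_def)
lemma rho_carrier: "a \<in> carrier G \<Longrightarrow> \<rho> a \<in> carrier_mat Dt Dt" unfolding \<rho>_def by (rule tpow_carrier[OF pi_carrier])

lemma rho_hom: "a \<in> carrier G \<Longrightarrow> b \<in> carrier G \<Longrightarrow> \<rho> (a \<otimes> b) = \<rho> a * \<rho> b"
  unfolding \<rho>_def by (simp add: pi_hom tpow_mult[OF pi_carrier pi_carrier])

lemma rho_inv: "a \<in> carrier G \<Longrightarrow> \<rho> (inv a) = adj (\<rho> a)"
  unfolding \<rho>_def by (simp add: unitary_rep_one_inv[OF grp rep] tpow_adj[OF pi_carrier])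

lemma psia_expand: "a \<in> carrier G \<Longrightarrow> \<psi>a a = vec_comb nd ({..<Dt}\<times>{..<Dt}) (\<lambda>(I,J). \<rho> a $$ (I,J)) w"
  unfolding \<psi>a_def w_def \<rho>_def by (rule adaptive_state_expansion[OF pi_carrier psi_carrier U_carrier])

lemma psia_unit: "a \<in> carrier G \<Longrightarrow> \<psi>a a \<bullet>c \<psi>a a = 1 \<and> \<psi>a a \<in> carrier_vec nd"
  unfolding \<psi>a_def using adaptive_state_unit[OF psi_carrier Uu unitary_kron[OF pi_unitary unitary_one]] psi_norm by simp

lemma Phi_carrier: "Phi c \<in> carrier_mat nd mt" by (simp add: Phi_def)
lemma phi_carrier: "\<phi> \<in> carrier_vec mt" by (simp add: \<phi>_def)
lemma R_carrier: "g \<in> carrier G \<Longrightarrow> R g \<in> carrier_mat mt mt" unfolding R_def by (rule kron_carrier[OF rho_carrier one_carrier_mat])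

lemma R_inv: "g \<in> carrier G \<Longrightarrow> R (inv g) = adj (R g)"
  unfolding R_def by (simp add: rho_inv adj_kron[OF rho_carrier one_carrier_mat])

lemma Phi_phi: assumes c: "c \<in> carrier G" shows "Phi c *\<^sub>v \<phi> = \<psi>a (inv c)"
proof (rule eq_vecI)
  have ic: "inv c \<in> carrier G" using c by simp
  fix r assume "r < dim_vec (\<psi>a (inv c))"
  hence r: "r < nd" using psia_unit[OF ic] unfolding carrier_vec_def by auto
  have "(Phi c *\<^sub>v \<phi>) $ r = (\<Sum>q<Dt*Dt. Phi c $$ (r,q) * \<phi> $ q)"
    by (rule index_mult_mat_vec_sum[OF Phi_carrier phi_carrier r])
  also have "\<dots> = (\<Sum>K<Dt. \<Sum>J<Dt. Phi c $$ (r,K*Dt+J) * \<phi> $ (K*Dt+J))" by (rule sum_lessThan_mult)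
  also have "\<dots> = (\<Sum>K<Dt. \<Sum>J<Dt. if K = J then (\<Sum>I<Dt. \<rho> (inv c) $$ (I, J) * (w (I, J) $ r)) else 0)"
    using r by (intro sum.cong refl) (auto simp: Phi_def \<phi>_def pair_index_less)
  also have "\<dots> = (\<Sum>J<Dt. \<Sum>I<Dt. \<rho> (inv c) $$ (I, J) * (w (I, J) $ r))"
    by (simp add: sum.delta)
  also have "\<dots> = (\<Sum>x\<in>{..<Dt}\<times>{..<Dt}. (case x of (I,J) \<Rightarrow> \<rho> (inv c) $$ (I,J)) * (w x $ r))"
    by (subst sum.swap) (simp add: sum.cartesian_product split_def)
  also have "\<dots> = \<psi>a (inv c) $ r" using r by (simp add: psia_expand[OF ic] index_vec_comb)
  finally show "(Phi c *\<^sub>v \<phi>) $ r = \<psi>a (inv c) $ r" .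
qed (use psia_unit[of "inv c"] assms in \<open>auto simp: Phi_def\<close>)

lemma Phi_R: assumes c: "c \<in> carrier G" and g: "g \<in> carrier G"
  shows "Phi c * R g = Phi (inv g \<otimes> c)"
proof (rule eq_matI)
  fix r q assume "r < dim_row (Phi (inv g \<otimes> c))" "q < dim_col (Phi (inv g \<otimes> c))"
  hence r: "r < nd" and q: "q < mt" by (auto simp: Phi_def)
  have qD: "q div Dt < Dt" "q mod Dt < Dt" using q D_pos by (auto simp: less_mult_imp_div_less)
  have ic: "inv c \<in> carrier G" using c by simp
  have "(Phi c * R g) $$ (r,q) = (\<Sum>q'<Dt*Dt. Phi c $$ (r,q') * R g $$ (q',q))"
    by (rule index_mult_mat_sum[OF Phi_carrier R_carrier[OF g] r q])
  also have "\<dots> = (\<Sum>K<Dt. \<Sum>J<Dt. Phi c $$ (r,K*Dt+J) * R g $$ (K*Dt+J,q))" by (rule sum_lessThan_mult)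
  also have "\<dots> = (\<Sum>K<Dt. \<Sum>J<Dt. if J = q mod Dt then Phi c $$ (r,K*Dt+ q mod Dt) * \<rho> g $$ (K, q div Dt) else 0)"
  proof (intro sum.cong refl)
    fix K J assume K: "K \<in> {..<Dt}" and J: "J \<in> {..<Dt}"
    have "R g $$ (K*Dt+J,q) = \<rho> g $$ (K, q div Dt) * (if J = q mod Dt then 1 else 0)"
      unfolding R_def using K J q D_pos qD
      by (subst kron_index[OF rho_carrier[OF g] one_carrier_mat]) (auto simp: pair_index_less)
    thus "Phi c $$ (r,K*Dt+J) * R g $$ (K*Dt+J,q) = (if J = q mod Dt then Phi c $$ (r,K*Dt+ q mod Dt) * \<rho> g $$ (K, q div Dt) else 0)"
      by auto
  qed
  also have "\<dots> = (\<Sum>K<Dt. Phi c $$ (r,K*Dt+ q mod Dt) * \<rho> g $$ (K, q div Dt))"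
    using qD by (simp add: sum.delta')
  also have "\<dots> = (\<Sum>K<Dt. \<Sum>I<Dt. \<rho> (inv c) $$ (I, K) * (w (I, q mod Dt) $ r) * \<rho> g $$ (K, q div Dt))"
    using r qD by (intro sum.cong refl) (auto simp: Phi_def pair_index_less sum_distrib_right)
  also have "\<dots> = (\<Sum>I<Dt. (\<Sum>K<Dt. \<rho> (inv c) $$ (I, K) * \<rho> g $$ (K, q div Dt)) * (w (I, q mod Dt) $ r))"
    by (subst sum.swap) (simp add: sum_distrib_left sum_distrib_right mult_ac)
  also have "\<dots> = (\<Sum>I<Dt. (\<rho> (inv c) * \<rho> g) $$ (I, q div Dt) * (w (I, q mod Dt) $ r))"
    using qD by (intro sum.cong refl) (simp add: index_mult_mat_sum[OF rho_carrier[OF ic] rho_carrier[OF g]])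
  also have "\<rho> (inv c) * \<rho> g = \<rho> (inv (inv g \<otimes> c))"
    using c g by (simp add: rho_hom inv_mult_group)
  also have "(\<Sum>I<Dt. \<rho> (inv (inv g \<otimes> c)) $$ (I, q div Dt) * (w (I, q mod Dt) $ r)) = Phi (inv g \<otimes> c) $$ (r,q)"
    using r q by (simp add: Phi_def)
  finally show "(Phi c * R g) $$ (r,q) = Phi (inv g \<otimes> c) $$ (r,q)" .
qed (use R_carrier[OF g] in \<open>auto simp: Phi_def\<close>)

lemma Phi_R_phi: assumes c: "c \<in> carrier G" and b: "b \<in> carrier G"
  shows "Phi c *\<^sub>v (R b *\<^sub>v \<phi>) = \<psi>a (inv c \<otimes> b)"
proof -
  have "Phi c *\<^sub>v (R b *\<^sub>v \<phi>) = (Phi c * R b) *\<^sub>v \<phi>"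
    by (rule assoc_mult_mat_vec[symmetric, OF Phi_carrier R_carrier[OF b] phi_carrier])
  also have "\<dots> = \<psi>a (inv (inv b \<otimes> c))" using c b by (simp add: Phi_R Phi_phi)
  also have "inv (inv b \<otimes> c) = inv c \<otimes> b" using c b by (simp add: inv_mult_group)
  finally show ?thesis .
qed

lemma card_G_pos: "card (carrier G) > 0" using fin by (auto simp: card_gt_0_iff)

definition "Q = mat_avg (carrier G) (\<lambda>c. adj (Phi c) * Phi c) mt mt"

lemma Phi_gram_carrier: "adj (Phi c) * Phi c \<in> carrier_mat mt mt"
  by (rule mult_carrier_mat[OF adj_carrier[OF Phi_carrier] Phi_carrier])

lemma Q_carrier: "Q \<in> carrier_mat mt mt" by (simp add: Q_def)

lemma Q_herm: "adj Q = Q"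
  unfolding Q_def
  by (subst adj_mat_avg, rule Phi_gram_carrier, rule mat_avg_cong, simp add: adj_mult[OF adj_carrier[OF Phi_carrier] Phi_carrier])

lemma Phi_gram_cscalar: "v \<in> carrier_vec mt \<Longrightarrow> (adj (Phi c) * Phi c *\<^sub>v v) \<bullet>c v = (Phi c *\<^sub>v v) \<bullet>c (Phi c *\<^sub>v v)"
proof -
  assume v: "v \<in> carrier_vec mt"
  have "adj (Phi c) * Phi c *\<^sub>v v = adj (Phi c) *\<^sub>v (Phi c *\<^sub>v v)"
    by (rule assoc_mult_mat_vec[OF adj_carrier[OF Phi_carrier] Phi_carrier v])
  thus ?thesis using adj_cscalar[OF Phi_carrier mult_mat_vec_carrier[OF Phi_carrier v] v] by simp
qed

lemma Q_cscalar: "v \<in> carrier_vec mt \<Longrightarrow> (Q *\<^sub>v v) \<bullet>c v = (\<Sum>c\<in>carrier G. (Phi c *\<^sub>v v) \<bullet>c (Phi c *\<^sub>v v)) / of_nat (card (carrier G))"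
  unfolding Q_def by (simp add: mat_avg_cscalar[OF Phi_gram_carrier] Phi_gram_cscalar)

lemma Q_psd: "v \<in> carrier_vec mt \<Longrightarrow> Im ((Q *\<^sub>v v) \<bullet>c v) = 0 \<and> Re ((Q *\<^sub>v v) \<bullet>c v) \<ge> 0"
proof -
  assume v: "v \<in> carrier_vec mt"
  have t: "Im ((Phi c *\<^sub>v v) \<bullet>c (Phi c *\<^sub>v v)) = 0 \<and> Re ((Phi c *\<^sub>v v) \<bullet>c (Phi c *\<^sub>v v)) \<ge> 0" for c
    using conjugate_square_ge_0_vec[of "Phi c *\<^sub>v v"] by (simp add: less_eq_complex_def)
  have "Im (\<Sum>c\<in>carrier G. (Phi c *\<^sub>v v) \<bullet>c (Phi c *\<^sub>v v)) = 0" using t by (simp add: Im_sum)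
  moreover have "Re (\<Sum>c\<in>carrier G. (Phi c *\<^sub>v v) \<bullet>c (Phi c *\<^sub>v v)) \<ge> 0" using t by (simp add: Re_sum sum_nonneg)
  ultimately show ?thesis unfolding Q_cscalar[OF v] by (simp add: Re_divide_of_nat Im_divide_of_nat)
qed

lemma Q_commute: assumes g: "g \<in> carrier G" shows "R g * Q = Q * R g"
proof -
  let ?H = "\<lambda>c. adj (Phi c) * Phi (inv g \<otimes> c)"
  have "Q * R g = mat_avg (carrier G) (\<lambda>c. adj (Phi c) * Phi c * R g) mt mt"
    unfolding Q_def by (rule mult_mat_avg_right[OF R_carrier[OF g] Phi_gram_carrier])
  also have "\<dots> = mat_avg (carrier G) ?H mt mt"
  proof (rule mat_avg_cong)
    fix c assume c: "c \<in> carrier G"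
    have "adj (Phi c) * Phi c * R g = adj (Phi c) * (Phi c * R g)"
      by (rule assoc_mult_mat[OF adj_carrier[OF Phi_carrier] Phi_carrier R_carrier[OF g]])
    thus "adj (Phi c) * Phi c * R g = ?H c" using Phi_R[OF c g] by simp
  qed
  finally have 1: "Q * R g = mat_avg (carrier G) ?H mt mt" .
  have "R g * Q = mat_avg (carrier G) (\<lambda>c. R g * (adj (Phi c) * Phi c)) mt mt"
    unfolding Q_def by (rule mult_mat_avg_left[OF R_carrier[OF g] Phi_gram_carrier])
  also have "\<dots> = mat_avg (carrier G) (\<lambda>c. ?H (g \<otimes> c)) mt mt"
  proof (rule mat_avg_cong)
    fix c assume c: "c \<in> carrier G"
    have ig: "inv g \<in> carrier G" using g by simp
    have "R g * (adj (Phi c) * Phi c) = (R g * adj (Phi c)) * Phi c"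
      by (rule assoc_mult_mat[symmetric, OF R_carrier[OF g] adj_carrier[OF Phi_carrier] Phi_carrier])
    also have "R g * adj (Phi c) = adj (Phi c * adj (R g))"
      by (simp add: adj_mult[OF Phi_carrier adj_carrier[OF R_carrier[OF g]]])
    also have "adj (R g) = R (inv g)" using R_inv[OF g] by simp
    also have "Phi c * R (inv g) = Phi (g \<otimes> c)" using Phi_R[OF c ig] g by simp
    finally have "R g * (adj (Phi c) * Phi c) = adj (Phi (g \<otimes> c)) * Phi c" .
    moreover have "inv g \<otimes> (g \<otimes> c) = c" using g c by (simp add: m_assoc[symmetric])
    ultimately show "R g * (adj (Phi c) * Phi c) = ?H (g \<otimes> c)" by simp
  qed
  also have "\<dots> = mat_avg (carrier G) ?H mt mt" by (rule mat_avg_reindex[OF bij_betw_mult_left[OF g]])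
  finally show ?thesis using 1 by simp
qed

lemma act_closed: "g \<in> carrier G \<Longrightarrow> x \<in> X \<Longrightarrow> act g x \<in> X" using ci by (simp add: coset_identification_def)
lemma act_one: "x \<in> X \<Longrightarrow> act \<one> x = x" using ci by (simp add: coset_identification_def)

lemma act_mult: "g \<in> carrier G \<Longrightarrow> h \<in> carrier G \<Longrightarrow> x \<in> X \<Longrightarrow> act (g \<otimes> h) x = act g (act h x)"
  using ci by (simp add: coset_identification_def)

lemma f_img: "f ` carrier G = X" using ci by (simp add: coset_identification_def)

lemma f_eq: "g \<in> carrier G \<Longrightarrow> h \<in> carrier G \<Longrightarrow> f (g \<otimes> h) = act g (f h)"
  using ci by (simp add: coset_identification_def)

lemma finite_X: "finite X" using f_img fin by auto

lemma card_X_pos: "card X > 0"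
proof -
  have "f \<one> \<in> X" using f_img by auto
  thus ?thesis using finite_X by (auto simp: card_gt_0_iff)
qed

lemma bij_act: "g \<in> carrier G \<Longrightarrow> bij_betw (act g) X X"
  by (rule bij_betwI[where g = "act (inv g)"])
     (auto simp: act_closed act_mult[symmetric] act_one)

lemma E_psd: "x \<in> X \<Longrightarrow> psd nd (E x)" using Ep by (simp add: povm_def)
lemma E_carrier: "x \<in> X \<Longrightarrow> E x \<in> carrier_mat nd nd" using E_psd by (simp add: psd_def)

lemma E_sum: "i < nd \<Longrightarrow> j < nd \<Longrightarrow> (\<Sum>x\<in>X. E x $$ (i,j)) = 1\<^sub>m nd $$ (i,j)"
  using Ep by (simp add: povm_def)

definition "M x = mat_avg (carrier G) (\<lambda>c. adj (Phi c) * E (act (inv c) x) * Phi c) mt mt"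

lemma E_act_carrier: "c \<in> carrier G \<Longrightarrow> x \<in> X \<Longrightarrow> E (act (inv c) x) \<in> carrier_mat nd nd"
  by (rule E_carrier[OF act_closed]) auto

lemma Phi_E_Phi_carrier: "c \<in> carrier G \<Longrightarrow> x \<in> X \<Longrightarrow> adj (Phi c) * E (act (inv c) x) * Phi c \<in> carrier_mat mt mt"
  by (rule mult_carrier_mat[OF mult_carrier_mat[OF adj_carrier[OF Phi_carrier] E_act_carrier] Phi_carrier])

lemma M_carrier: "M x \<in> carrier_mat mt mt" by (simp add: M_def)

lemma Phi_E_Phi_mult_vec: assumes c: "c \<in> carrier G" and x: "x \<in> X" and v: "v \<in> carrier_vec mt"
  shows "adj (Phi c) * E (act (inv c) x) * Phi c *\<^sub>v v = adj (Phi c) *\<^sub>v (E (act (inv c) x) *\<^sub>v (Phi c *\<^sub>v v))"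
proof -
  have "adj (Phi c) * E (act (inv c) x) * Phi c *\<^sub>v v = adj (Phi c) * E (act (inv c) x) *\<^sub>v (Phi c *\<^sub>v v)"
    by (rule assoc_mult_mat_vec[OF mult_carrier_mat[OF adj_carrier[OF Phi_carrier] E_act_carrier[OF c x]] Phi_carrier v])
  also have "\<dots> = adj (Phi c) *\<^sub>v (E (act (inv c) x) *\<^sub>v (Phi c *\<^sub>v v))"
    by (rule assoc_mult_mat_vec[OF adj_carrier[OF Phi_carrier] E_act_carrier[OF c x] mult_mat_vec_carrier[OF Phi_carrier v]])
  finally show ?thesis .
qed

lemma M_cscalar: assumes x: "x \<in> X" and v: "v \<in> carrier_vec mt" and z: "z \<in> carrier_vec mt"
  shows "(M x *\<^sub>v v) \<bullet>c z = (\<Sum>c\<in>carrier G. (E (act (inv c) x) *\<^sub>v (Phi c *\<^sub>v v)) \<bullet>c (Phi c *\<^sub>v z)) / of_nat (card (carrier G))"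
proof -
  have "(M x *\<^sub>v v) \<bullet>c z = (\<Sum>c\<in>carrier G. (adj (Phi c) * E (act (inv c) x) * Phi c *\<^sub>v v) \<bullet>c z) / of_nat (card (carrier G))"
    unfolding M_def by (rule mat_avg_cscalar[OF Phi_E_Phi_carrier[OF _ x] v z])
  also have "\<dots> = (\<Sum>c\<in>carrier G. (E (act (inv c) x) *\<^sub>v (Phi c *\<^sub>v v)) \<bullet>c (Phi c *\<^sub>v z)) / of_nat (card (carrier G))"
  proof (intro arg_cong[where f = "\<lambda>z. z / _"] sum.cong refl)
    fix c assume c: "c \<in> carrier G"
    show "(adj (Phi c) * E (act (inv c) x) * Phi c *\<^sub>v v) \<bullet>c z = (E (act (inv c) x) *\<^sub>v (Phi c *\<^sub>v v)) \<bullet>c (Phi c *\<^sub>v z)"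
      unfolding Phi_E_Phi_mult_vec[OF c x v]
      by (rule adj_cscalar[OF Phi_carrier mult_mat_vec_carrier[OF E_act_carrier[OF c x] mult_mat_vec_carrier[OF Phi_carrier v]] z])
  qed
  finally show ?thesis .
qed

lemma M_psd: assumes x: "x \<in> X" and v: "v \<in> carrier_vec mt"
  shows "Im ((M x *\<^sub>v v) \<bullet>c v) = 0 \<and> Re ((M x *\<^sub>v v) \<bullet>c v) \<ge> 0"
proof -
  have t: "Im ((E (act (inv c) x) *\<^sub>v (Phi c *\<^sub>v v)) \<bullet>c (Phi c *\<^sub>v v)) = 0 \<and> Re ((E (act (inv c) x) *\<^sub>v (Phi c *\<^sub>v v)) \<bullet>c (Phi c *\<^sub>v v)) \<ge> 0"
    if c: "c \<in> carrier G" for c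
    using E_psd[OF act_closed[OF inv_closed[OF c] x]] mult_mat_vec_carrier[OF Phi_carrier v] by (simp add: psd_def)
  have "Im (\<Sum>c\<in>carrier G. (E (act (inv c) x) *\<^sub>v (Phi c *\<^sub>v v)) \<bullet>c (Phi c *\<^sub>v v)) = 0" using t by (simp add: Im_sum)
  moreover have "Re (\<Sum>c\<in>carrier G. (E (act (inv c) x) *\<^sub>v (Phi c *\<^sub>v v)) \<bullet>c (Phi c *\<^sub>v v)) \<ge> 0" using t by (simp add: Re_sum sum_nonneg)
  ultimately show ?thesis unfolding M_cscalar[OF x v v] by (simp add: Re_divide_of_nat Im_divide_of_nat)
qed

lemma Phi_E_Phi_sum:
  assumes c: "c \<in> carrier G" and k: "k < mt" and l: "l < mt"
  shows "(\<Sum>x\<in>X. (adj (Phi c) * E (act (inv c) x) * Phi c) $$ (k,l)) = (adj (Phi c) * Phi c) $$ (k,l)"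
proof -
  have "(\<Sum>x\<in>X. (adj (Phi c) * E (act (inv c) x) * Phi c) $$ (k,l))
     = (\<Sum>x\<in>X. \<Sum>p<nd. \<Sum>q<nd. adj (Phi c) $$ (k,p) * E (act (inv c) x) $$ (p,q) * Phi c $$ (q,l))"
    by (intro sum.cong refl index_mult_mat_triple[OF adj_carrier[OF Phi_carrier] E_act_carrier[OF c] Phi_carrier k l])
  also have "\<dots> = (\<Sum>p<nd. \<Sum>q<nd. adj (Phi c) $$ (k,p) * (\<Sum>x\<in>X. E (act (inv c) x) $$ (p,q)) * Phi c $$ (q,l))"
    by (simp add: sum_distrib_left sum_distrib_right sum.swap[of _ X])
  also have "\<dots> = (\<Sum>p<nd. \<Sum>q<nd. adj (Phi c) $$ (k,p) * 1\<^sub>m nd $$ (p,q) * Phi c $$ (q,l))"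
  proof (intro sum.cong refl)
    fix p q assume p: "p \<in> {..<nd}" and q: "q \<in> {..<nd}"
    have "(\<Sum>x\<in>X. E (act (inv c) x) $$ (p,q)) = (\<Sum>x\<in>X. E x $$ (p,q))"
      by (rule sum.reindex_bij_betw[OF bij_act[OF inv_closed[OF c]], of "\<lambda>x. E x $$ (p,q)"])
    also have "\<dots> = 1\<^sub>m nd $$ (p,q)" using p q by (simp add: E_sum)
    finally show "adj (Phi c) $$ (k,p) * (\<Sum>x\<in>X. E (act (inv c) x) $$ (p,q)) * Phi c $$ (q,l)
        = adj (Phi c) $$ (k,p) * 1\<^sub>m nd $$ (p,q) * Phi c $$ (q,l)" by simp
  qed
  also have "\<dots> = (adj (Phi c) * 1\<^sub>m nd * Phi c) $$ (k,l)"
    by (rule index_mult_mat_triple[symmetric, OF adj_carrier[OF Phi_carrier] one_carrier_mat Phi_carrier k l])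
  also have "adj (Phi c) * 1\<^sub>m nd = adj (Phi c)" by (rule right_mult_one_mat[OF adj_carrier[OF Phi_carrier]])
  finally show ?thesis .
qed

lemma M_sum: assumes k: "k < mt" and l: "l < mt"
  shows "(\<Sum>x\<in>X. M x $$ (k,l)) = Q $$ (k,l)"
proof -
  have "(\<Sum>x\<in>X. M x $$ (k,l)) = (\<Sum>x\<in>X. (\<Sum>c\<in>carrier G. (adj (Phi c) * E (act (inv c) x) * Phi c) $$ (k,l)) / of_nat (card (carrier G)))"
    using k l by (simp add: M_def index_mat_avg)
  also have "\<dots> = (\<Sum>c\<in>carrier G. (\<Sum>x\<in>X. (adj (Phi c) * E (act (inv c) x) * Phi c) $$ (k,l))) / of_nat (card (carrier G))"
    by (simp add: sum_divide_distrib[symmetric] sum.swap[of _ X])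
  also have "\<dots> = (\<Sum>c\<in>carrier G. (adj (Phi c) * Phi c) $$ (k,l)) / of_nat (card (carrier G))"
    by (intro arg_cong[where f = "\<lambda>z. z / _"] sum.cong refl Phi_E_Phi_sum k l)
  also have "\<dots> = Q $$ (k,l)" using k l by (simp add: Q_def index_mat_avg)
  finally show ?thesis .
qed

definition "hit g = (E (f g) *\<^sub>v \<psi>a g) \<bullet>c \<psi>a g"

lemma f_X: "g \<in> carrier G \<Longrightarrow> f g \<in> X" using f_img by auto

end

text \<open>The nonadaptive algorithm is built from a diagonalisation of the \<open>G\<close>-invariant operator \<open>Q\<close>:
  its state is \<open>T \<phi>\<close> with \<open>T = Q\<^sup>1\<^sup>/\<^sup>2\<close>, and its measurement conjugates the averaged operators \<open>M x\<close>
  by the pseudo-inverse \<open>S\<close> of \<open>T\<close>; the term \<open>IP / card X\<close> only completes the POVM on the kernel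
  of \<open>Q\<close>, which the states \<open>R b T \<phi>\<close> never reach.\<close>

locale adaptive_algorithm_diagonalized = adaptive_algorithm +
  fixes U0 :: "complex mat" and d0 :: "nat \<Rightarrow> real"
  assumes U0_unitary: "unitary_mat mt U0" and Q_diag: "Q = func_calc U0 mt (\<lambda>i. complex_of_real (d0 i))"
begin

lemma U0_carrier: "U0 \<in> carrier_mat mt mt" using U0_unitary by (simp add: unitary_mat_def)

lemma d0_nonneg: "i < mt \<Longrightarrow> d0 i \<ge> 0"
  by (rule func_calc_psd_nonneg[OF U0_unitary]) (use Q_psd in \<open>auto simp: Q_diag[symmetric]\<close>)

definition "T = func_calc U0 mt (\<lambda>i. complex_of_real (sqrt (d0 i)))"
definition "S = func_calc U0 mt (\<lambda>i. if d0 i > 0 then complex_of_real (1 / sqrt (d0 i)) else 0)"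
definition "Pr = func_calc U0 mt (\<lambda>i. if d0 i > 0 then 1 else 0)"
definition "IP = func_calc U0 mt (\<lambda>i. if d0 i > 0 then 0 else 1)"
definition "E' x = S * M x * S + (1 / of_nat (card X)) \<cdot>\<^sub>m IP"
definition "\<phi>' = T *\<^sub>v \<phi>"

lemma T_carrier: "T \<in> carrier_mat mt mt" by (simp add: T_def U0_carrier)
lemma S_carrier: "S \<in> carrier_mat mt mt" by (simp add: S_def U0_carrier)
lemma Pr_carrier: "Pr \<in> carrier_mat mt mt" by (simp add: Pr_def U0_carrier)
lemma IP_carrier: "IP \<in> carrier_mat mt mt" by (simp add: IP_def U0_carrier)
lemma T_herm: "adj T = T" unfolding T_def func_calc_adj[OF U0_carrier] by simp
lemma S_herm: "adj S = S" unfolding S_def func_calc_adj[OF U0_carrier] by (rule func_calc_cong) auto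

lemma T_square: "T * T = Q"
  unfolding T_def func_calc_mult[OF U0_unitary] Q_diag
  by (rule func_calc_cong) (simp add: d0_nonneg of_real_mult[symmetric] del: of_real_mult)

lemma S_T: "S * T = Pr"
  unfolding T_def S_def Pr_def func_calc_mult[OF U0_unitary]
  by (rule func_calc_cong) (auto simp: of_real_mult[symmetric] simp del: of_real_mult)

lemma S_Q_S: "S * Q * S = Pr"
  unfolding S_def Pr_def Q_diag func_calc_mult[OF U0_unitary]
proof (rule func_calc_cong)
  fix i assume i: "i < mt"
  show "(if 0 < d0 i then complex_of_real (1 / sqrt (d0 i)) else 0) * complex_of_real (d0 i) *
      (if 0 < d0 i then complex_of_real (1 / sqrt (d0 i)) else 0) = (if 0 < d0 i then 1 else 0)"
  proof (cases "d0 i > 0")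
    case True
    have "complex_of_real (1 / sqrt (d0 i)) * complex_of_real (d0 i) * complex_of_real (1 / sqrt (d0 i))
       = complex_of_real (1 / sqrt (d0 i) * d0 i * (1 / sqrt (d0 i)))" by (simp only: of_real_mult)
    also have "1 / sqrt (d0 i) * d0 i * (1 / sqrt (d0 i)) = d0 i / (sqrt (d0 i) * sqrt (d0 i))"
      by (simp add: field_simps)
    also have "sqrt (d0 i) * sqrt (d0 i) = d0 i" using True by simp
    also have "d0 i / d0 i = 1" using True by simp
    finally show ?thesis using True by simp
  qed simp
qed

lemma Pr_plus_IP: "Pr + IP = 1\<^sub>m mt"
  unfolding Pr_def IP_def func_calc_add[OF U0_carrier] func_calc_one[OF U0_unitary, symmetric] by (rule func_calc_cong) auto

lemma IP_T: "IP * T = 0\<^sub>m mt mt"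
  unfolding IP_def T_def func_calc_mult[OF U0_unitary] func_calc_zero[OF U0_carrier, symmetric]
proof (rule func_calc_cong)
  fix i assume "i < mt"
  hence "d0 i > 0 \<or> d0 i = 0" using d0_nonneg[of i] by linarith
  thus "(if 0 < d0 i then 0 else 1) * complex_of_real (sqrt (d0 i)) = 0" by auto
qed

lemma Q_IP: "Q * IP = 0\<^sub>m mt mt"
  unfolding IP_def Q_diag func_calc_mult[OF U0_unitary] func_calc_zero[OF U0_carrier, symmetric]
proof (rule func_calc_cong)
  fix i assume "i < mt"
  hence "d0 i > 0 \<or> d0 i = 0" using d0_nonneg[of i] by linarith
  thus "complex_of_real (d0 i) * (if 0 < d0 i then 0 else 1) = 0" by auto
qed

lemma T_commute: "g \<in> carrier G \<Longrightarrow> R g * T = T * R g"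
  unfolding T_def
  by (rule func_calc_commute[OF U0_unitary R_carrier, of g d0 "\<lambda>x. complex_of_real (sqrt x)"]) (use Q_commute Q_diag in auto)

lemma IP_psd: "v \<in> carrier_vec mt \<Longrightarrow> Im ((IP *\<^sub>v v) \<bullet>c v) = 0 \<and> Re ((IP *\<^sub>v v) \<bullet>c v) \<ge> 0"
  unfolding IP_def by (rule func_calc_psd[OF U0_carrier]) auto

lemma Phi_IP: assumes c: "c \<in> carrier G" and v: "v \<in> carrier_vec mt"
  shows "Phi c *\<^sub>v (IP *\<^sub>v v) = 0\<^sub>v nd"
proof -
  let ?y = "IP *\<^sub>v v"
  have y: "?y \<in> carrier_vec mt" by (rule mult_mat_vec_carrier[OF IP_carrier v])
  have "Q *\<^sub>v ?y = (Q * IP) *\<^sub>v v" by (rule assoc_mult_mat_vec[symmetric, OF Q_carrier IP_carrier v])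
  also have "\<dots> = 0\<^sub>v mt" using v by (simp add: Q_IP zero_mat_vec)
  finally have "(Q *\<^sub>v ?y) \<bullet>c ?y = 0" using y by simp
  hence "(\<Sum>c\<in>carrier G. (Phi c *\<^sub>v ?y) \<bullet>c (Phi c *\<^sub>v ?y)) = 0"
    using Q_cscalar[OF y] card_G_pos by simp
  hence "\<forall>c\<in>carrier G. (Phi c *\<^sub>v ?y) \<bullet>c (Phi c *\<^sub>v ?y) = 0"
    using sum_nonneg_eq_0_iff[OF fin, of "\<lambda>c. (Phi c *\<^sub>v ?y) \<bullet>c (Phi c *\<^sub>v ?y)"] conjugate_square_ge_0_vec
    by blast
  hence "(Phi c *\<^sub>v ?y) \<bullet>c (Phi c *\<^sub>v ?y) = 0" using c by blast
  thus ?thesis using conjugate_square_eq_0_vec[OF mult_mat_vec_carrier[OF Phi_carrier y]] by simp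
qed

lemma M_IP_right: assumes x: "x \<in> X" and v: "v \<in> carrier_vec mt" and z: "z \<in> carrier_vec mt"
  shows "(M x *\<^sub>v v) \<bullet>c (IP *\<^sub>v z) = 0"
  unfolding M_cscalar[OF x v mult_mat_vec_carrier[OF IP_carrier z]]
proof -
  have "(E (act (inv c) x) *\<^sub>v (Phi c *\<^sub>v v)) \<bullet>c (Phi c *\<^sub>v (IP *\<^sub>v z)) = 0" if c: "c \<in> carrier G" for c
    unfolding Phi_IP[OF c z]
    by (rule cscalar_zero_right, rule mult_mat_vec_carrier[OF E_act_carrier[OF c x] mult_mat_vec_carrier[OF Phi_carrier v]])
  thus "(\<Sum>c\<in>carrier G. (E (act (inv c) x) *\<^sub>v (Phi c *\<^sub>v v)) \<bullet>c (Phi c *\<^sub>v (IP *\<^sub>v z))) / of_nat (card (carrier G)) = 0"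
    by simp
qed

lemma M_IP_left: assumes x: "x \<in> X" and v: "v \<in> carrier_vec mt"
  shows "M x *\<^sub>v (IP *\<^sub>v v) = 0\<^sub>v mt"
proof -
  have y: "IP *\<^sub>v v \<in> carrier_vec mt" by (rule mult_mat_vec_carrier[OF IP_carrier v])
  have z: "(adj (Phi c) * E (act (inv c) x) * Phi c *\<^sub>v (IP *\<^sub>v v)) = 0\<^sub>v mt" if c: "c \<in> carrier G" for c
    unfolding Phi_E_Phi_mult_vec[OF c x y] Phi_IP[OF c v]
    using mat_vec_zero[OF E_act_carrier[OF c x]] mat_vec_zero[OF adj_carrier[OF Phi_carrier]] by simp
  have "M x *\<^sub>v (IP *\<^sub>v v) = vec mt (\<lambda>i. (\<Sum>c\<in>carrier G. (adj (Phi c) * E (act (inv c) x) * Phi c *\<^sub>v (IP *\<^sub>v v)) $ i) / of_nat (card (carrier G)))"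
    unfolding M_def by (rule mat_avg_mult_vec[OF Phi_E_Phi_carrier[OF _ x] y])
  also have "\<dots> = 0\<^sub>v mt" by (rule eq_vecI) (auto simp: z)
  finally show ?thesis .
qed

lemma \<phi>'_carrier: "\<phi>' \<in> carrier_vec mt" unfolding \<phi>'_def by (rule mult_mat_vec_carrier[OF T_carrier phi_carrier])

lemma \<phi>'_unit: "\<phi>' \<bullet>c \<phi>' = 1"
proof -
  have "\<phi>' \<bullet>c \<phi>' = (T *\<^sub>v \<phi>') \<bullet>c \<phi>"
    unfolding \<phi>'_def by (rule hermitian_cscalar[OF T_carrier T_herm \<phi>'_carrier[unfolded \<phi>'_def] phi_carrier, symmetric])
  also have "T *\<^sub>v \<phi>' = Q *\<^sub>v \<phi>"
    unfolding \<phi>'_def T_square[symmetric] by (rule assoc_mult_mat_vec[symmetric, OF T_carrier T_carrier phi_carrier])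
  also have "(Q *\<^sub>v \<phi>) \<bullet>c \<phi> = (\<Sum>c\<in>carrier G. (Phi c *\<^sub>v \<phi>) \<bullet>c (Phi c *\<^sub>v \<phi>)) / of_nat (card (carrier G))"
    by (rule Q_cscalar[OF phi_carrier])
  also have "\<dots> = (\<Sum>c\<in>carrier G. 1) / of_nat (card (carrier G))"
    by (intro arg_cong[where f = "\<lambda>z. z / _"] sum.cong refl) (simp add: Phi_phi psia_unit)
  also have "\<dots> = 1" using card_G_pos by simp
  finally show ?thesis .
qed

lemma E'_carrier: "E' x \<in> carrier_mat mt mt"
  unfolding E'_def using S_carrier M_carrier IP_carrier by (auto intro!: add_carrier_mat mult_carrier_mat[of _ mt mt _ mt])

lemma E'_psd: assumes x: "x \<in> X" shows "psd mt (E' x)"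
  unfolding psd_def
proof (rule conjI[OF E'_carrier], intro ballI)
  fix v :: "complex vec" assume v: "v \<in> carrier_vec mt"
  have Sv: "S *\<^sub>v v \<in> carrier_vec mt" by (rule mult_mat_vec_carrier[OF S_carrier v])
  have MSv: "M x *\<^sub>v (S *\<^sub>v v) \<in> carrier_vec mt" by (rule mult_mat_vec_carrier[OF M_carrier Sv])
  have IPv: "IP *\<^sub>v v \<in> carrier_vec mt" by (rule mult_mat_vec_carrier[OF IP_carrier v])
  let ?c = "1 / of_nat (card X) :: complex"
  have SMS: "S * M x * S \<in> carrier_mat mt mt" by (rule mult_carrier_mat[OF mult_carrier_mat[OF S_carrier M_carrier] S_carrier])
  have "E' x *\<^sub>v v = (S * M x * S) *\<^sub>v v + (?c \<cdot>\<^sub>m IP) *\<^sub>v v"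
    unfolding E'_def by (rule add_mult_distrib_mat_vec[OF SMS _ v]) (use IP_carrier in simp)
  also have "(S * M x * S) *\<^sub>v v = S *\<^sub>v (M x *\<^sub>v (S *\<^sub>v v))"
    using assoc_mult_mat_vec[OF mult_carrier_mat[OF S_carrier M_carrier] S_carrier v]
      assoc_mult_mat_vec[OF S_carrier M_carrier Sv] by simp
  also have "(?c \<cdot>\<^sub>m IP) *\<^sub>v v = ?c \<cdot>\<^sub>v (IP *\<^sub>v v)" by (rule smult_mat_vec[OF IP_carrier v])
  finally have e: "E' x *\<^sub>v v = S *\<^sub>v (M x *\<^sub>v (S *\<^sub>v v)) + ?c \<cdot>\<^sub>v (IP *\<^sub>v v)" .
  have "(E' x *\<^sub>v v) \<bullet>c v = (S *\<^sub>v (M x *\<^sub>v (S *\<^sub>v v))) \<bullet>c v + (?c \<cdot>\<^sub>v (IP *\<^sub>v v)) \<bullet>c v"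
    unfolding e by (rule cscalar_add_left[OF mult_mat_vec_carrier[OF S_carrier MSv] _ v]) (use IPv in simp)
  also have "(S *\<^sub>v (M x *\<^sub>v (S *\<^sub>v v))) \<bullet>c v = (M x *\<^sub>v (S *\<^sub>v v)) \<bullet>c (S *\<^sub>v v)"
    by (rule hermitian_cscalar[OF S_carrier S_herm MSv v])
  also have "(?c \<cdot>\<^sub>v (IP *\<^sub>v v)) \<bullet>c v = ?c * ((IP *\<^sub>v v) \<bullet>c v)" by (rule cscalar_smult_left[OF IPv v])
  finally have e2: "(E' x *\<^sub>v v) \<bullet>c v = (M x *\<^sub>v (S *\<^sub>v v)) \<bullet>c (S *\<^sub>v v) + ?c * ((IP *\<^sub>v v) \<bullet>c v)" .
  note m = M_psd[OF x Sv] and p = IP_psd[OF v]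
  have c: "?c = complex_of_real (1 / real (card X))" by simp
  have cpos: "1 / real (card X) \<ge> 0" by simp
  show "Im ((E' x *\<^sub>v v) \<bullet>c v) = 0 \<and> Re ((E' x *\<^sub>v v) \<bullet>c v) \<ge> 0"
    unfolding e2 c using m p cpos by simp
qed

lemma E'_sum: assumes i: "i < mt" and j: "j < mt"
  shows "(\<Sum>x\<in>X. E' x $$ (i,j)) = 1\<^sub>m mt $$ (i,j)"
proof -
  have e: "E' x $$ (i,j) = (S * M x * S) $$ (i,j) + (1 / of_nat (card X)) * IP $$ (i,j)" for x
    unfolding E'_def using i j S_carrier M_carrier IP_carrier by simp
  have "(\<Sum>x\<in>X. (S * M x * S) $$ (i,j)) = (\<Sum>x\<in>X. \<Sum>k<mt. \<Sum>l<mt. S $$ (i,k) * M x $$ (k,l) * S $$ (l,j))"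
    by (intro sum.cong refl index_mult_mat_triple[OF S_carrier M_carrier S_carrier i j])
  also have "\<dots> = (\<Sum>k<mt. \<Sum>l<mt. S $$ (i,k) * (\<Sum>x\<in>X. M x $$ (k,l)) * S $$ (l,j))"
    by (simp add: sum_distrib_left sum_distrib_right sum.swap[of _ X])
  also have "\<dots> = (\<Sum>k<mt. \<Sum>l<mt. S $$ (i,k) * Q $$ (k,l) * S $$ (l,j))"
    by (intro sum.cong refl) (simp add: M_sum)
  also have "\<dots> = (S * Q * S) $$ (i,j)" by (rule index_mult_mat_triple[symmetric, OF S_carrier Q_carrier S_carrier i j])
  also have "\<dots> = Pr $$ (i,j)" by (simp add: S_Q_S)
  finally have 1: "(\<Sum>x\<in>X. (S * M x * S) $$ (i,j)) = Pr $$ (i,j)" .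
  have 2: "(\<Sum>x\<in>X. (1 / of_nat (card X)) * IP $$ (i,j)) = IP $$ (i,j)" using card_X_pos by simp
  have "(\<Sum>x\<in>X. E' x $$ (i,j)) = Pr $$ (i,j) + IP $$ (i,j)"
    unfolding e sum.distrib 1 2 ..
  also have "\<dots> = (Pr + IP) $$ (i,j)" using i j Pr_carrier IP_carrier by simp
  finally show ?thesis by (simp add: Pr_plus_IP)
qed

lemma E'_T_cscalar:
  assumes x: "x \<in> X" and u: "u \<in> carrier_vec mt"
  shows "(E' x *\<^sub>v (T *\<^sub>v u)) \<bullet>c (T *\<^sub>v u) = (M x *\<^sub>v u) \<bullet>c u"
proof -
  have Tu: "T *\<^sub>v u \<in> carrier_vec mt" by (rule mult_mat_vec_carrier[OF T_carrier u])
  have Mu: "M x *\<^sub>v u \<in> carrier_vec mt" by (rule mult_mat_vec_carrier[OF M_carrier u])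
  have SMS: "S * M x * S \<in> carrier_mat mt mt" by (rule mult_carrier_mat[OF mult_carrier_mat[OF S_carrier M_carrier] S_carrier])
  have cIP: "(1 / of_nat (card X)) \<cdot>\<^sub>m IP \<in> carrier_mat mt mt" using IP_carrier by simp
  have IPTu: "IP *\<^sub>v (T *\<^sub>v u) = 0\<^sub>v mt"
    using assoc_mult_mat_vec[OF IP_carrier T_carrier u] IP_T zero_mat_vec[OF u] by simp
  have STu: "S *\<^sub>v (T *\<^sub>v u) = Pr *\<^sub>v u"
    using assoc_mult_mat_vec[OF S_carrier T_carrier u] S_T by simp
  have Pru: "Pr *\<^sub>v u + IP *\<^sub>v u = u"
    using add_mult_distrib_mat_vec[OF Pr_carrier IP_carrier u] Pr_plus_IP u by simp
  have MPr: "M x *\<^sub>v (Pr *\<^sub>v u) = M x *\<^sub>v u"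
  proof -
    have "M x *\<^sub>v u = M x *\<^sub>v (Pr *\<^sub>v u) + M x *\<^sub>v (IP *\<^sub>v u)"
      using mult_add_distrib_mat_vec[OF M_carrier mult_mat_vec_carrier[OF Pr_carrier u] mult_mat_vec_carrier[OF IP_carrier u]] Pru
      by simp
    thus ?thesis using M_IP_left[OF x u] mult_mat_vec_carrier[OF M_carrier mult_mat_vec_carrier[OF Pr_carrier u]] by simp
  qed
  have E'Tu: "E' x *\<^sub>v (T *\<^sub>v u) = S *\<^sub>v (M x *\<^sub>v u)"
  proof -
    have "E' x *\<^sub>v (T *\<^sub>v u) = (S * M x * S) *\<^sub>v (T *\<^sub>v u) + ((1 / of_nat (card X)) \<cdot>\<^sub>m IP) *\<^sub>v (T *\<^sub>v u)"
      unfolding E'_def by (rule add_mult_distrib_mat_vec[OF SMS cIP Tu])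
    also have "((1 / of_nat (card X)) \<cdot>\<^sub>m IP) *\<^sub>v (T *\<^sub>v u) = 0\<^sub>v mt"
      using smult_mat_vec[OF IP_carrier Tu] IPTu by (auto intro!: eq_vecI)
    also have "(S * M x * S) *\<^sub>v (T *\<^sub>v u) = S *\<^sub>v (M x *\<^sub>v (S *\<^sub>v (T *\<^sub>v u)))"
      using assoc_mult_mat_vec[OF mult_carrier_mat[OF S_carrier M_carrier] S_carrier Tu]
        assoc_mult_mat_vec[OF S_carrier M_carrier mult_mat_vec_carrier[OF S_carrier Tu]] by simp
    finally show ?thesis using STu MPr mult_mat_vec_carrier[OF S_carrier Mu] by simp
  qed
  have "(E' x *\<^sub>v (T *\<^sub>v u)) \<bullet>c (T *\<^sub>v u) = (M x *\<^sub>v u) \<bullet>c (S *\<^sub>v (T *\<^sub>v u))"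
    unfolding E'Tu by (rule hermitian_cscalar[OF S_carrier S_herm Mu Tu])
  also have "\<dots> = (M x *\<^sub>v u) \<bullet>c (Pr *\<^sub>v u) + (M x *\<^sub>v u) \<bullet>c (IP *\<^sub>v u)"
    unfolding STu using M_IP_right[OF x u u] by simp
  also have "\<dots> = (M x *\<^sub>v u) \<bullet>c u"
    using cscalar_add_right[OF mult_mat_vec_carrier[OF Pr_carrier u] mult_mat_vec_carrier[OF IP_carrier u] Mu] Pru by simp
  finally show ?thesis .
qed

lemma nonadaptive_success_at: assumes b: "b \<in> carrier G"
  shows "(E' (f b) *\<^sub>v (R b *\<^sub>v \<phi>')) \<bullet>c (R b *\<^sub>v \<phi>') = (\<Sum>g\<in>carrier G. hit g) / of_nat (card (carrier G))"
proof -
  define u where "u = R b *\<^sub>v \<phi>"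
  have u: "u \<in> carrier_vec mt" unfolding u_def by (rule mult_mat_vec_carrier[OF R_carrier[OF b] phi_carrier])
  have "R b *\<^sub>v \<phi>' = (R b * T) *\<^sub>v \<phi>" unfolding \<phi>'_def
    by (rule assoc_mult_mat_vec[symmetric, OF R_carrier[OF b] T_carrier phi_carrier])
  also have "\<dots> = T *\<^sub>v u" unfolding u_def T_commute[OF b] by (rule assoc_mult_mat_vec[OF T_carrier R_carrier[OF b] phi_carrier])
  finally have "(E' (f b) *\<^sub>v (R b *\<^sub>v \<phi>')) \<bullet>c (R b *\<^sub>v \<phi>') = (M (f b) *\<^sub>v u) \<bullet>c u"
    using E'_T_cscalar[OF f_X[OF b] u] by simp
  also have "\<dots> = (\<Sum>c\<in>carrier G. (E (act (inv c) (f b)) *\<^sub>v (Phi c *\<^sub>v u)) \<bullet>c (Phi c *\<^sub>v u)) / of_nat (card (carrier G))"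
    by (rule M_cscalar[OF f_X[OF b] u u])
  also have "\<dots> = (\<Sum>c\<in>carrier G. hit (inv c \<otimes> b)) / of_nat (card (carrier G))"
  proof (intro arg_cong[where f = "\<lambda>z. z / _"] sum.cong refl)
    fix c assume c: "c \<in> carrier G"
    have "act (inv c) (f b) = f (inv c \<otimes> b)" using c b by (simp add: f_eq)
    thus "(E (act (inv c) (f b)) *\<^sub>v (Phi c *\<^sub>v u)) \<bullet>c (Phi c *\<^sub>v u) = hit (inv c \<otimes> b)"
      unfolding u_def Phi_R_phi[OF c b] hit_def by simp
  qed
  also have "(\<Sum>c\<in>carrier G. hit (inv c \<otimes> b)) = (\<Sum>g\<in>carrier G. hit g)"
    by (rule sum.reindex_bij_betw[OF bij_betw_inv_mult[OF b]])
  finally show ?thesis .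
qed

lemma nonadaptive_if_adaptive_diagonalized:
  assumes P: "success_prob G f E (\<lambda>a. adaptive_state (kron (\<pi> a) (1\<^sub>m N)) U t \<psi>) = P"
  shows "nonadaptive_alg_exists G d \<pi> X f t P"
  unfolding nonadaptive_alg_exists_def
proof (intro exI conjI)
  show "Dt \<ge> 1" using D_pos by (metis One_nat_def Suc_leI)
  show "unit_vec (d ^ t * Dt) \<phi>'" using \<phi>'_carrier \<phi>'_unit by (simp add: unit_vec_def)
  show "povm (d ^ t * Dt) X E'" unfolding povm_def using E'_psd E'_sum by simp
  have R': "\<And>a. kron (tpow (\<pi> a) t) (1\<^sub>m Dt) = R a" by (simp add: R_def \<rho>_def)
  let ?F = "(\<Sum>g\<in>carrier G. hit g) / of_nat (card (carrier G))"
  have "success_prob G f E' (\<lambda>a. kron (tpow (\<pi> a) t) (1\<^sub>m Dt) *\<^sub>v \<phi>')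
     = (\<Sum>b\<in>carrier G. Re ?F) / real (card (carrier G))"
    unfolding success_prob_def R' by (intro arg_cong[where f = "\<lambda>z. z / _"] sum.cong refl) (simp add: nonadaptive_success_at)
  also have "\<dots> = Re ?F" using card_G_pos by simp
  also have "\<dots> = (\<Sum>g\<in>carrier G. Re (hit g)) / real (card (carrier G))"
    by (simp add: Re_divide_of_nat Re_sum)
  also have "\<dots> = P" using P unfolding success_prob_def hit_def \<psi>a_def by simp
  finally show "success_prob G f E' (\<lambda>a. kron (tpow (\<pi> a) t) (1\<^sub>m Dt) *\<^sub>v \<phi>') = P" .
qed

end

lemma (in adaptive_algorithm) nonadaptive_if_adaptive:
  assumes "success_prob G f E (\<lambda>a. adaptive_state (kron (\<pi> a) (1\<^sub>m N)) U t \<psi>) = P"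
  shows "nonadaptive_alg_exists G d \<pi> X f t P"
proof -
  obtain U0 d0 where "unitary_mat mt U0" "Q = func_calc U0 mt (\<lambda>i. complex_of_real (d0 i))"
    using hermitian_spectral_decomposition[OF Q_carrier Q_herm] by (auto simp: func_calc_def)
  then interpret adaptive_algorithm_diagonalized G d N t \<pi> U \<psi> E X act f U0 d0
    by unfold_locales
  show ?thesis by (rule nonadaptive_if_adaptive_diagonalized[OF assms])
qed

section \<open>From nonadaptive to adaptive algorithms\<close>

definition perm_mat :: "nat \<Rightarrow> (nat \<Rightarrow> nat) \<Rightarrow> complex mat" where
  "perm_mat n \<sigma> = mat n n (\<lambda>(p,q). if q = \<sigma> p then 1 else 0)"

lemma perm_mat_carrier[simp]: "perm_mat n \<sigma> \<in> carrier_mat n n" by (simp add: perm_mat_def)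
lemma perm_mat_dims[simp]: "dim_row (perm_mat n \<sigma>) = n" "dim_col (perm_mat n \<sigma>) = n" by (simp_all add: perm_mat_def)

lemma cnj_indicator: "cnj (if P then 1 else 0) = (if P then 1 else 0)"
  by simp

lemma perm_mat_conj:
  assumes B: "B \<in> carrier_mat n n" and s: "\<And>p. p < n \<Longrightarrow> \<sigma> p < n" and p: "p < n" and q: "q < n"
  shows "(perm_mat n \<sigma> * B * adj (perm_mat n \<sigma>)) $$ (p,q) = B $$ (\<sigma> p, \<sigma> q)"
proof -
  have "(perm_mat n \<sigma> * B * adj (perm_mat n \<sigma>)) $$ (p,q) = (\<Sum>k<n. \<Sum>l<n. perm_mat n \<sigma> $$ (p,k) * B $$ (k,l) * adj (perm_mat n \<sigma>) $$ (l,q))"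
    by (rule index_mult_mat_triple[OF perm_mat_carrier B adj_carrier[OF perm_mat_carrier] p q])
  also have "\<dots> = (\<Sum>k<n. if k = \<sigma> p then (\<Sum>l<n. if l = \<sigma> q then B $$ (k,l) else 0) else 0)"
  proof (intro sum.cong refl)
    fix k assume k: "k \<in> {..<n}"
    show "(\<Sum>l<n. perm_mat n \<sigma> $$ (p,k) * B $$ (k,l) * adj (perm_mat n \<sigma>) $$ (l,q)) =
        (if k = \<sigma> p then (\<Sum>l<n. if l = \<sigma> q then B $$ (k,l) else 0) else 0)"
      using p q k s[OF q] by (auto simp: perm_mat_def cnj_indicator sum_delta_mult_right)
  qed
  also have "\<dots> = B $$ (\<sigma> p, \<sigma> q)" using s[OF p] s[OF q] by simp
  finally show ?thesis .
qed

lemma perm_mat_unitary: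
  assumes s: "\<And>p. p < n \<Longrightarrow> \<sigma> p < n" and inj: "\<And>p q. p < n \<Longrightarrow> q < n \<Longrightarrow> \<sigma> p = \<sigma> q \<Longrightarrow> p = q"
  shows "unitary_mat n (perm_mat n \<sigma>)"
proof -
  have 1: "perm_mat n \<sigma> * adj (perm_mat n \<sigma>) = 1\<^sub>m n"
  proof (rule eq_matI)
    fix p q assume "p < dim_row (1\<^sub>m n)" "q < dim_col (1\<^sub>m n)"
    hence p: "p < n" and q: "q < n" by auto
    have "(perm_mat n \<sigma> * adj (perm_mat n \<sigma>)) $$ (p,q) = (\<Sum>k<n. perm_mat n \<sigma> $$ (p,k) * adj (perm_mat n \<sigma>) $$ (k,q))"
      by (rule index_mult_mat_sum[OF perm_mat_carrier adj_carrier[OF perm_mat_carrier] p q])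
    also have "\<dots> = (\<Sum>k<n. if k = \<sigma> p then (if \<sigma> p = \<sigma> q then 1 else 0) else 0)"
      using p q by (intro sum.cong refl) (auto simp: perm_mat_def)
    also have "\<dots> = (if \<sigma> p = \<sigma> q then 1 else 0)" using s[OF p] by simp
    also have "\<dots> = 1\<^sub>m n $$ (p,q)" using p q inj[OF p q] by auto
    finally show "(perm_mat n \<sigma> * adj (perm_mat n \<sigma>)) $$ (p,q) = 1\<^sub>m n $$ (p,q)" .
  qed auto
  have 2: "adj (perm_mat n \<sigma>) * perm_mat n \<sigma> = 1\<^sub>m n"
    by (rule mat_mult_left_right_inverse[OF perm_mat_carrier adj_carrier[OF perm_mat_carrier] 1])
  show ?thesis using 1 2 by (simp add: unitary_mat_def)
qed

lemma triple_index_less: "i < e \<Longrightarrow> j < d \<Longrightarrow> k < M \<Longrightarrow> i*(d*M) + j*M + k < e*(d*(M::nat))"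
proof -
  assume i: "i < e" and j: "j < d" and k: "k < M"
  have "j*M + k < d*M" using pair_index_less[OF j k] .
  hence "i*(d*M) + (j*M + k) < e*(d*M)" using pair_index_less[OF i] by blast
  thus ?thesis by (simp add: add.assoc)
qed

lemma triple_index_div_mod:
  assumes j: "j < d" and k: "k < (M::nat)"
  shows "(i*(d*M) + j*M + k) div (d*M) = i" "(i*(d*M) + j*M + k) mod (d*M) = j*M + k"
    "((i*(d*M) + j*M + k) mod (d*M)) div M = j" "(i*(d*M) + j*M + k) mod M = k"
proof -
  have jk: "j*M + k < d*M" using pair_index_less[OF j k] .
  show a: "(i*(d*M) + j*M + k) div (d*M) = i" using jk by (simp add: add.assoc)
  show b: "(i*(d*M) + j*M + k) mod (d*M) = j*M + k" using jk by (simp add: add.assoc)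
  show "((i*(d*M) + j*M + k) mod (d*M)) div M = j" using b k by simp
  have "(i*(d*M) + j*M + k) = (i*d + j)*M + k" by (simp add: algebra_simps)
  thus "(i*(d*M) + j*M + k) mod M = k" using k by simp
qed

lemma triple_index_exists:
  assumes p: "p < e*(d*(M::nat))"
  shows "\<exists>i j k. i < e \<and> j < d \<and> k < M \<and> p = i*(d*M) + j*M + k"
proof -
  have M0: "M > 0" and dM0: "d*M > 0" using p by (cases M; cases d; auto)+
  define i where "i = p div (d*M)"
  define j where "j = (p mod (d*M)) div M"
  define k where "k = p mod M"
  have i: "i < e" unfolding i_def using p by (simp add: less_mult_imp_div_less)
  have "p mod (d*M) < d*M" using dM0 by simp
  hence j: "j < d" unfolding j_def by (simp add: less_mult_imp_div_less)
  have k: "k < M" unfolding k_def using M0 by simp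
  have "p = i*(d*M) + p mod (d*M)" unfolding i_def by (rule div_mult_mod_eq[symmetric])
  also have "p mod (d*M) = j*M + k" unfolding j_def k_def
    by (metis div_mult_mod_eq mod_mult2_eq mult.commute add.commute mod_mod_cancel dvd_triv_right)
  finally show ?thesis using i j k by (auto simp: add.assoc)
qed

definition swap_index :: "nat \<Rightarrow> nat \<Rightarrow> nat \<Rightarrow> nat \<Rightarrow> nat" where
  "swap_index e d M p = ((p mod (d*M)) div M) * (e*M) + (p div (d*M)) * M + p mod M"

lemma swap_index_enc: "i < e \<Longrightarrow> j < d \<Longrightarrow> k < M \<Longrightarrow> swap_index e d M (i*(d*M) + j*M + k) = j*(e*M) + i*M + k"
  unfolding swap_index_def by (simp add: triple_index_div_mod)

lemma swap_index_less_inj: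
  assumes p: "p < e*(d*M)" and q: "q < e*(d*M)"
  shows "swap_index e d M p < e*(d*M)" "swap_index e d M p = swap_index e d M q \<Longrightarrow> p = q"
proof -
  obtain i j k where a: "i < e" "j < d" "k < M" "p = i*(d*M) + j*M + k" using triple_index_exists[OF p] by blast
  obtain i' j' k' where b: "i' < e" "j' < d" "k' < M" "q = i'*(d*M) + j'*M + k'" using triple_index_exists[OF q] by blast
  have "swap_index e d M p < d*(e*M)" using a swap_index_enc triple_index_less[OF a(2,1,3)] by simp
  thus "swap_index e d M p < e*(d*M)" by (simp add: mult_ac)
  assume "swap_index e d M p = swap_index e d M q"
  hence "j*(e*M) + (i*M + k) = j'*(e*M) + (i'*M + k')" using a b swap_index_enc by (simp add: add.assoc)
  hence "j = j' \<and> i = i' \<and> k = k'"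
    using pair_index_eq_iff[OF pair_index_less[OF a(1,3)] pair_index_less[OF b(1,3)]] pair_index_eq_iff[OF a(3) b(3)]
    by blast
  thus "p = q" using a b by simp
qed

lemma kron_one_swap:
  assumes A: "A \<in> carrier_mat d d"
  shows "perm_mat (e*(d*M)) (swap_index e d M) * kron A (1\<^sub>m (e*M)) * adj (perm_mat (e*(d*M)) (swap_index e d M))
    = kron (1\<^sub>m e) (kron A (1\<^sub>m M))"
    (is "?P * ?B * adj ?P = ?L")
proof (rule eq_matI)
  let ?n = "e*(d*M)"
  have Bc: "?B \<in> carrier_mat ?n ?n" using kron_carrier[OF A one_carrier_mat[of "e*M"]] by (simp add: mult_ac)
  fix p q assume "p < dim_row ?L" "q < dim_col ?L"
  hence p: "p < ?n" and q: "q < ?n" using A by auto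
  obtain i j k where a: "i < e" "j < d" "k < M" "p = i*(d*M) + j*M + k" using triple_index_exists[OF p] by blast
  obtain i' j' k' where b: "i' < e" "j' < d" "k' < M" "q = i'*(d*M) + j'*M + k'" using triple_index_exists[OF q] by blast
  have "(?P * ?B * adj ?P) $$ (p,q) = ?B $$ (swap_index e d M p, swap_index e d M q)"
    by (rule perm_mat_conj[OF Bc _ p q]) (use swap_index_less_inj in auto)
  also have "\<dots> = ?B $$ (j*(e*M) + (i*M + k), j'*(e*M) + (i'*M + k'))" using a b swap_index_enc by (simp add: add.assoc)
  also have "\<dots> = A $$ (j,j') * 1\<^sub>m (e*M) $$ (i*M + k, i'*M + k')"
    by (rule kron_index_pair[OF A one_carrier_mat a(2) b(2) pair_index_less[OF a(1,3)] pair_index_less[OF b(1,3)]])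
  also have "\<dots> = 1\<^sub>m e $$ (i,i') * kron A (1\<^sub>m M) $$ (j*M+k, j'*M+k')"
    using a b pair_index_less[OF a(1,3)] pair_index_less[OF b(1,3)] pair_index_eq_iff[OF a(3) b(3)] by (simp add: kron_index_pair[OF A one_carrier_mat])
  also have "\<dots> = ?L $$ (i*(d*M) + (j*M+k), i'*(d*M) + (j'*M+k'))"
    by (rule kron_index_pair[symmetric, OF one_carrier_mat kron_carrier[OF A one_carrier_mat] a(1) b(1)
        pair_index_less[OF a(2,3)] pair_index_less[OF b(2,3)]])
  finally show "(?P * ?B * adj ?P) $$ (p,q) = ?L $$ (p,q)" using a b by (simp add: add.assoc)
qed (use A in auto)

lemma perm_swap_conj_oracle:
  assumes A: "A \<in> carrier_mat d d" and v: "v \<in> carrier_vec (e*(d*M))"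
  defines "P \<equiv> perm_mat (e*(d*M)) (swap_index e d M)"
  shows "P *\<^sub>v (kron A (1\<^sub>m (e*M)) *\<^sub>v (adj P *\<^sub>v v)) = kron (1\<^sub>m e) (kron A (1\<^sub>m M)) *\<^sub>v v"
proof -
  let ?n = "e*(d*M)" and ?O = "kron A (1\<^sub>m (e*M))"
  have Pc: "P \<in> carrier_mat ?n ?n" by (simp add: P_def)
  have Oc: "?O \<in> carrier_mat ?n ?n" using kron_carrier[OF A one_carrier_mat[of "e*M"]] by (simp add: mult_ac)
  have "P *\<^sub>v (?O *\<^sub>v (adj P *\<^sub>v v)) = (P * ?O * adj P) *\<^sub>v v"
    using assoc_mult_mat_vec[OF mult_carrier_mat[OF Pc Oc] adj_carrier[OF Pc] v]
      assoc_mult_mat_vec[OF Pc Oc mult_mat_vec_carrier[OF adj_carrier[OF Pc] v]] by simp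
  also have "P * ?O * adj P = kron (1\<^sub>m e) (kron A (1\<^sub>m M))"
    unfolding P_def by (rule kron_one_swap[OF A])
  finally show ?thesis .
qed

lemma kron_tpow_mult_kron_one:
  assumes A: "A \<in> carrier_mat d d"
  shows "kron (tpow A k) (1\<^sub>m (d*M)) * kron (1\<^sub>m (d^k)) (kron A (1\<^sub>m M)) = kron (tpow A (Suc k)) (1\<^sub>m M)"
proof -
  have "kron (tpow A k) (1\<^sub>m (d*M)) * kron (1\<^sub>m (d^k)) (kron A (1\<^sub>m M))
      = kron (tpow A k * 1\<^sub>m (d^k)) (1\<^sub>m (d*M) * kron A (1\<^sub>m M))"
    by (rule kron_mult[OF tpow_carrier[OF A] one_carrier_mat one_carrier_mat kron_carrier[OF A one_carrier_mat]])
  also have "\<dots> = kron (tpow A k) (kron A (1\<^sub>m M))"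
    using right_mult_one_mat[OF tpow_carrier[OF A, of k]] left_mult_one_mat[OF kron_carrier[OF A one_carrier_mat[of M]]]
    by simp
  also have "\<dots> = kron (tpow A (Suc k)) (1\<^sub>m M)"
    by (simp add: kron_assoc[OF tpow_carrier[OF A, of k] A one_carrier_mat])
  finally show ?thesis .
qed

lemma adaptive_state_Suc_shift:
  "adaptive_state Or (\<lambda>i. if i = 1 then V else U (i - 1)) (Suc j) x = adaptive_state Or U j (V *\<^sub>v (Or *\<^sub>v x))"
  by (induct j) auto

definition adaptive_simulation :: "nat \<Rightarrow> nat \<Rightarrow> nat \<Rightarrow> (nat \<Rightarrow> complex mat) \<Rightarrow> complex mat \<Rightarrow> bool" where
  "adaptive_simulation d k M U Z \<longleftrightarrow>
     unitary_mat (d^(Suc k)*M) Z \<and> (\<forall>i\<in>{1..Suc k}. unitary_mat (d*(d^k*M)) (U i)) \<and>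
     (\<forall>A\<in>carrier_mat d d. \<forall>v\<in>carrier_vec (d^(Suc k)*M).
        adaptive_state (kron A (1\<^sub>m (d^k*M))) U (Suc k) (Z *\<^sub>v v) = kron (tpow A (Suc k)) (1\<^sub>m M) *\<^sub>v v)"

lemma adaptive_simulation_0: "adaptive_simulation d 0 M (\<lambda>_. 1\<^sub>m (d*M)) (1\<^sub>m (d*M))"
  unfolding adaptive_simulation_def
proof (intro conjI ballI)
  show "unitary_mat (d^(Suc 0)*M) (1\<^sub>m (d*M))" using unitary_one by simp
  show "unitary_mat (d*(d^0*M)) (1\<^sub>m (d*M))" for i using unitary_one by simp
  fix A :: "complex mat" and v :: "complex vec" assume A: "A \<in> carrier_mat d d" and v: "v \<in> carrier_vec (d^(Suc 0)*M)"
  have "kron A (1\<^sub>m M) *\<^sub>v v \<in> carrier_vec (d*M)" using A v by (auto intro!: mult_mat_vec_carrier)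
  thus "adaptive_state (kron A (1\<^sub>m (d^0*M))) (\<lambda>_. 1\<^sub>m (d*M)) (Suc 0) (1\<^sub>m (d*M) *\<^sub>v v)
      = kron (tpow A (Suc 0)) (1\<^sub>m M) *\<^sub>v v"
    using v tpow_1[OF A] by simp
qed

text \<open>The extra query is made first; the swap \<open>P\<close> then moves the factor it acted on to the last
  \<open>V\<close>-position, so that the remaining queries build up \<open>A\<^sup>\<otimes>\<^sup>(\<^sup>k\<^sup>+\<^sup>1\<^sup>)\<close> on the first factors.\<close>

lemma adaptive_simulation_Suc:
  assumes sim: "adaptive_simulation d k (d*M) U Z"
  defines "P \<equiv> perm_mat (d^(Suc k)*(d*M)) (swap_index (d^(Suc k)) d M)"
  shows "adaptive_simulation d (Suc k) M (\<lambda>i. if i = 1 then Z * P else U (i - 1)) (adj P)"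
proof -
  let ?e = "d^(Suc k)"
  let ?n = "?e*(d*M)"
  let ?U' = "\<lambda>i. if i = 1 then Z * P else U (i - 1)"
  have n1: "d^(Suc (Suc k))*M = ?n" "d*(d^(Suc k)*M) = ?n" "d*(d^k*(d*M)) = ?n" by (simp_all add: mult_ac)
  have n2: "d^k*(d*M) = d^(Suc k)*M" by (simp add: mult_ac)
  have Z: "unitary_mat ?n Z" and U: "\<forall>i\<in>{1..Suc k}. unitary_mat ?n (U i)"
    and H: "\<And>A v. A \<in> carrier_mat d d \<Longrightarrow> v \<in> carrier_vec ?n \<Longrightarrow>
        adaptive_state (kron A (1\<^sub>m (d^(Suc k)*M))) U (Suc k) (Z *\<^sub>v v) = kron (tpow A (Suc k)) (1\<^sub>m (d*M)) *\<^sub>v v"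
    using sim unfolding adaptive_simulation_def n1 n2 by auto
  have Pu: "unitary_mat ?n P" unfolding P_def by (rule perm_mat_unitary) (use swap_index_less_inj in auto)
  have Pc: "P \<in> carrier_mat ?n ?n" and Zc: "Z \<in> carrier_mat ?n ?n"
    using Z by (auto simp: P_def unitary_mat_def)
  show ?thesis unfolding adaptive_simulation_def n1
  proof (intro conjI ballI)
    show "unitary_mat ?n (adj P)" by (rule unitary_adj[OF Pu])
    show "unitary_mat ?n (?U' i)" if i: "i \<in> {1..Suc (Suc k)}" for i
    proof (cases "i = 1")
      case False
      with i have "i - 1 \<in> {1..Suc k}" by auto
      thus ?thesis using U False by simp
    qed (use unitary_mult[OF Z Pu] in auto)
  next
    fix A :: "complex mat" and v :: "complex vec" assume A: "A \<in> carrier_mat d d" and v: "v \<in> carrier_vec ?n"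
    let ?O = "kron A (1\<^sub>m (d^(Suc k)*M))"
    have Oc: "?O \<in> carrier_mat ?n ?n" using kron_carrier[OF A one_carrier_mat[of "d^(Suc k)*M"]] unfolding n1 .
    have sw: "P *\<^sub>v (?O *\<^sub>v (adj P *\<^sub>v v)) = kron (1\<^sub>m ?e) (kron A (1\<^sub>m M)) *\<^sub>v v"
      unfolding P_def by (rule perm_swap_conj_oracle[OF A v])
    have "adaptive_state ?O ?U' (Suc (Suc k)) (adj P *\<^sub>v v) = adaptive_state ?O U (Suc k) ((Z * P) *\<^sub>v (?O *\<^sub>v (adj P *\<^sub>v v)))"
      by (rule adaptive_state_Suc_shift)
    also have "(Z * P) *\<^sub>v (?O *\<^sub>v (adj P *\<^sub>v v)) = Z *\<^sub>v (kron (1\<^sub>m ?e) (kron A (1\<^sub>m M)) *\<^sub>v v)"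
      using Zc Pc Oc v sw by (subst assoc_mult_mat_vec[of _ ?n ?n _ ?n]) (auto intro!: mult_mat_vec_carrier)
    also have "adaptive_state ?O U (Suc k) \<dots> = kron (tpow A (Suc k)) (1\<^sub>m (d*M)) *\<^sub>v (kron (1\<^sub>m ?e) (kron A (1\<^sub>m M)) *\<^sub>v v)"
      by (rule H[OF A]) (use A v in \<open>auto intro!: mult_mat_vec_carrier simp: mult_ac\<close>)
    also have "\<dots> = (kron (tpow A (Suc k)) (1\<^sub>m (d*M)) * kron (1\<^sub>m ?e) (kron A (1\<^sub>m M))) *\<^sub>v v"
      using v tpow_carrier[OF A, of "Suc k"] A
      by (intro assoc_mult_mat_vec[symmetric, of _ ?n ?n _ ?n]) auto
    also have "\<dots> = kron (tpow A (Suc (Suc k))) (1\<^sub>m M) *\<^sub>v v" by (simp only: kron_tpow_mult_kron_one[OF A, of "Suc k" M])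
    finally show "adaptive_state ?O ?U' (Suc (Suc k)) (adj P *\<^sub>v v) = kron (tpow A (Suc (Suc k))) (1\<^sub>m M) *\<^sub>v v" .
  qed
qed

lemma adaptive_simulation_exists: "\<exists>U Z. adaptive_simulation d k M U Z"
proof (induct k arbitrary: M)
  case 0 show ?case using adaptive_simulation_0 by blast
next
  case (Suc k M) thus ?case using adaptive_simulation_Suc by blast
qed

lemma success_prob_cong:
  "(\<And>a. a \<in> carrier G \<Longrightarrow> st a = st' a) \<Longrightarrow> success_prob G f E st = success_prob G f E st'"
  unfolding success_prob_def by (metis (no_types, lifting) sum.cong)

lemma adaptive_if_nonadaptive:
  fixes G :: "('g, 'b) monoid_scheme"
  assumes rep: "unitary_rep G d \<pi>" and t: "t \<ge> 1" and na: "nonadaptive_alg_exists G d \<pi> X f t P"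
  shows "adaptive_alg_exists G d \<pi> X f t P"
proof -
  obtain N \<psi> E where N: "N \<ge> 1" and psi: "unit_vec (d^t*N) \<psi>" and E: "povm (d^t*N) X E"
    and P: "success_prob G f E (\<lambda>a. kron (tpow (\<pi> a) t) (1\<^sub>m N) *\<^sub>v \<psi>) = P"
    using na unfolding nonadaptive_alg_exists_def by blast
  obtain k where tk: "t = Suc k" using t by (cases t) auto
  have d0: "d > 0" using unit_vec_dim_pos[OF psi] tk by (cases d) auto
  obtain U Z where "adaptive_simulation d k N U Z" using adaptive_simulation_exists by blast
  hence Z: "unitary_mat (d*(d^k*N)) Z" and U: "\<forall>i\<in>{1..t}. unitary_mat (d*(d^k*N)) (U i)"
    and H: "\<And>A. A \<in> carrier_mat d d \<Longrightarrow>
        adaptive_state (kron A (1\<^sub>m (d^k*N))) U t (Z *\<^sub>v \<psi>) = kron (tpow A t) (1\<^sub>m N) *\<^sub>v \<psi>"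
    using psi tk by (auto simp: adaptive_simulation_def unit_vec_def mult_ac)
  have eq: "d*(d^k*N) = d^t*N" using tk by simp
  show ?thesis unfolding adaptive_alg_exists_def
  proof (intro exI conjI)
    show "d^k*N \<ge> 1" using d0 N by (simp add: Suc_le_eq)
    show "unit_vec (d*(d^k*N)) (Z *\<^sub>v \<psi>)"
      using unitary_cscalar_self[OF Z] psi Z unfolding eq
      by (auto simp: unit_vec_def unitary_mat_def intro!: mult_mat_vec_carrier)
    show "\<forall>i\<in>{1..t}. unitary_mat (d*(d^k*N)) (U i)" by (rule U)
    show "povm (d*(d^k*N)) X E" unfolding eq by (rule E)
    show "success_prob G f E (\<lambda>a. adaptive_state (kron (\<pi> a) (1\<^sub>m (d^k*N))) U t (Z *\<^sub>v \<psi>)) = P"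
      unfolding P[symmetric] using rep
      by (intro success_prob_cong H) (simp add: unitary_rep_def unitary_mat_def)
  qed
qed

theorem theorem1:
  fixes G :: "('g, 'b) monoid_scheme" and d :: nat and \<pi> :: "'g \<Rightarrow> complex mat"
    and X :: "'x set" and act :: "'g \<Rightarrow> 'x \<Rightarrow> 'x" and f :: "'g \<Rightarrow> 'x"
    and t :: nat and P :: real
  assumes "group G" and "finite (carrier G)"
    and "unitary_rep G d \<pi>"
    and "coset_identification G X act f"
    and "t \<ge> 1" and "0 \<le> P" and "P \<le> 1"
  shows "adaptive_alg_exists G d \<pi> X f t P \<longleftrightarrow> nonadaptive_alg_exists G d \<pi> X f t P"
proof
  assume "adaptive_alg_exists G d \<pi> X f t P"
  then obtain N \<psi> U E where "N \<ge> 1" and psi: "unit_vec (d * N) \<psi>"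
    and U: "\<forall>i\<in>{1..t}. unitary_mat (d * N) (U i)" and E: "povm (d * N) X E"
    and P: "success_prob G f E (\<lambda>a. adaptive_state (kron (\<pi> a) (1\<^sub>m N)) U t \<psi>) = P"
    unfolding adaptive_alg_exists_def by blast
  interpret alg: adaptive_algorithm G d N t \<pi> U \<psi> E X act f
    unfolding adaptive_algorithm_def using assms psi U E by auto
  show "nonadaptive_alg_exists G d \<pi> X f t P" by (rule alg.nonadaptive_if_adaptive[OF P])
next
  assume "nonadaptive_alg_exists G d \<pi> X f t P"
  thus "adaptive_alg_exists G d \<pi> X f t P" by (rule adaptive_if_nonadaptive[OF assms(3) assms(5)])
qed

end
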